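(* Let $n\ge3$ be odd, let $K$ be a field containing an element $v$ transcendental over a subfield $F$, let $q$ be an indeterminate, and let $J_q(n)=D_n/\omega(q)$ with $D_n$ defined over $K(q)$. Then the images in $J_q(n)$ of the elements $[S_1,S_2,\tau]$, where $t$ ranges over positive integers, $S_1,S_2\in\mathrm{Ann}(n)\cap I(t)$ and $\tau\in\{0,1,\dots,t-1\}$, form a $K(q)$-basis of $J_q(n)$.
   Context: Put $[2]=v+v^{-1}$. An affine $n$-diagram consists of the nodes $\mathbb{Z}\times\{0,1\}\subset\mathbb{R}^2$ together with curves called edges such that: every node is an endpoint of exactly one edge; edges lie in $\mathbb{R}\times[0,1]$; an edge not joining two nodes is an infinite horizontal line meeting no node, and there are finitely many such; no two edges intersect; the diagram is invariant under horizontal translation by $n$. Diagrams are taken up to isotopy (equivalently drawn on a cylinder with nodes $1,\dots,n$, indices mod $n$, on a top and a bottom circle). An edge is vertical if it joins a top node to a bottom node. Product $AB$: place $A$ on top of $B$, identify the middle rows, remove the $x$ closed loops formed to get $C$; $AB=[2]^xC$. $D_n$ is the algebra with basis the affine $n$-diagrams. An involution $S$ of $\{1,\dots,n\}$ is annular if for each pair $i<j$ interchanged by $S$: $S(\{i,\dots,j\})=\{i,\dots,j\}$, and $\{i,\dots,j\}$ contains either no fixed point or all fixed points of $S$. $\mathrm{Ann}(n)$: annular involutions; $I(t)$: involutions with exactly $t$ fixed points. For a diagram $D$ with a vertical edge, $w_1(D)$ is the number of pairs $(i,j)\in\mathbb{Z}^2$, $i>j$, with bottom node $(j,0)$ joined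 to top node $(i,1)$ by an edge crossing $x=1/2$; $w_2(D)$ likewise with $i<j$; $w(D)=w_1(D)-w_2(D)$. The map $D\mapsto(S_1,S_2,w(D))$, with $S_1$ (resp. $S_2$) interchanging $i,j$ iff top (resp. bottom) nodes $i,j$ are joined, is a bijection from diagrams with a vertical edge (all diagrams, when $n$ is odd) onto triples with $S_1,S_2\in\mathrm{Ann}(n)\cap I(t)$, $t>0$, $w\in\mathbb{Z}$; $[S_1,S_2,w]$ denotes the corresponding diagram. $\omega(q)$ is the two-sided ideal of $D_n$ spanned by all $[S_1,S_2,w]-q^s[S_1,S_2,w+ts]$ with $t>0$, $S_1,S_2\in\mathrm{Ann}(n)\cap I(t)$, $w,s\in\mathbb{Z}$. *)

theory Defs
  imports "HOL-Computational_Algebra.Polynomial" "HOL-Computational_Algebra.Fraction_Field"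
begin

text \<open>A node (i, True) is the top node (i,1); (i, False) is the bottom node (i,0).
  A diagram without infinite horizontal lines is encoded by the fixed-point-free
  involution of the node set sending each node to the other endpoint of its edge.\<close>

type_synonym node = "int \<times> bool"
type_synonym diag = "node \<Rightarrow> node"

text \<open>Linear order on the boundary of the strip R x [0,1] (bottom row left to right,
  then top row right to left); two chords can be drawn disjointly iff they do not interleave.\<close>
definition bd_less :: "node \<Rightarrow> node \<Rightarrow> bool" where
  "bd_less x y \<longleftrightarrow>
     (if snd x = False \<and> snd y = False then fst x < fst y
      else if snd x = False \<and> snd y = True then True
      else if snd x = True \<and> snd y = False then False
      else fst y < fst x)"

definition noncrossing :: "diag \<Rightarrow> bool" where
  "noncrossing m \<longleftrightarrow>
     \<not> (\<exists>a c. bd_less a c \<and> bd_less c (m a) \<and> bd_less (m a) (m c))"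

definition is_diagram :: "nat \<Rightarrow> diag \<Rightarrow> bool" where
  "is_diagram n m \<longleftrightarrow>
     (\<forall>x. m x \<noteq> x) \<and> (\<forall>x. m (m x) = x) \<and>
     (\<forall>i r. m (i + int n, r) = (fst (m (i, r)) + int n, snd (m (i, r)))) \<and>
     noncrossing m"

definition involution_on :: "nat \<Rightarrow> (nat \<Rightarrow> nat) \<Rightarrow> bool" where
  "involution_on n S \<longleftrightarrow>
     (\<forall>i\<in>{1..n}. S i \<in> {1..n} \<and> S (S i) = i) \<and> (\<forall>i. i \<notin> {1..n} \<longrightarrow> S i = i)"

definition fixed_points :: "nat \<Rightarrow> (nat \<Rightarrow> nat) \<Rightarrow> nat set" where
  "fixed_points n S = {k \<in> {1..n}. S k = k}"

definition Ann :: "nat \<Rightarrow> (nat \<Rightarrow> nat) set" where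
  "Ann n = {S. involution_on n S \<and>
     (\<forall>i j. 1 \<le> i \<longrightarrow> i < j \<longrightarrow> j \<le> n \<longrightarrow> S i = j \<longrightarrow>
        S ` {i..j} = {i..j} \<and>
        ({k \<in> {i..j}. S k = k} = {} \<or> fixed_points n S \<subseteq> {i..j}))}"

definition Inv :: "nat \<Rightarrow> nat \<Rightarrow> (nat \<Rightarrow> nat) set" where
  "Inv n t = {S. involution_on n S \<and> card (fixed_points n S) = t}"

definition red :: "nat \<Rightarrow> int \<Rightarrow> nat" where
  "red n i = nat ((i - 1) mod int n + 1)"

definition topS :: "nat \<Rightarrow> diag \<Rightarrow> nat \<Rightarrow> nat" where
  "topS n D i = (if i \<in> {1..n} \<and> snd (D (int i, True)) then red n (fst (D (int i, True))) else i)"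

definition botS :: "nat \<Rightarrow> diag \<Rightarrow> nat \<Rightarrow> nat" where
  "botS n D i = (if i \<in> {1..n} \<and> \<not> snd (D (int i, False)) then red n (fst (D (int i, False))) else i)"

definition w1 :: "diag \<Rightarrow> nat" where
  "w1 D = card {(i, j). i > j \<and> D (j, False) = (i, True) \<and> j \<le> 0 \<and> 1 \<le> i}"

definition w2 :: "diag \<Rightarrow> nat" where
  "w2 D = card {(i, j). i < j \<and> D (j, False) = (i, True) \<and> i \<le> 0 \<and> 1 \<le> j}"

definition wind :: "diag \<Rightarrow> int" where
  "wind D = int (w1 D) - int (w2 D)"

text \<open>[S1, S2, w]: the diagram corresponding to the triple (bijection stated in the paper).\<close>
definition bracket :: "nat \<Rightarrow> (nat \<Rightarrow> nat) \<Rightarrow> (nat \<Rightarrow> nat) \<Rightarrow> int \<Rightarrow> diag" where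
  "bracket n S1 S2 w =
     (THE D. is_diagram n D \<and> topS n D = S1 \<and> botS n D = S2 \<and> wind D = w)"

definition Dn :: "nat \<Rightarrow> (diag \<Rightarrow> 'a::field) set" where
  "Dn n = {f. finite {D. f D \<noteq> 0} \<and> (\<forall>D. f D \<noteq> 0 \<longrightarrow> is_diagram n D)}"

definition dvec :: "diag \<Rightarrow> diag \<Rightarrow> 'a::field" where
  "dvec D = (\<lambda>E. if E = D then 1 else 0)"

definition lin_span :: "('b \<Rightarrow> 'a::field) set \<Rightarrow> ('b \<Rightarrow> 'a) set" where
  "lin_span X = {(\<lambda>E. \<Sum>g\<in>G. c g * g E) | G c. finite G \<and> G \<subseteq> X}"

definition omega :: "nat \<Rightarrow> 'a::field \<Rightarrow> (diag \<Rightarrow> 'a) set" where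
  "omega n q = lin_span
     {(\<lambda>E. dvec (bracket n S1 S2 w) E - q powi s * dvec (bracket n S1 S2 (w + int t * s)) E)
       | t S1 S2 w s. t > 0 \<and> S1 \<in> Ann n \<inter> Inv n t \<and> S2 \<in> Ann n \<inter> Inv n t}"

definition quotient_basis ::
  "('b \<Rightarrow> 'a::field) set \<Rightarrow> ('b \<Rightarrow> 'a) set \<Rightarrow> 'i set \<Rightarrow> ('i \<Rightarrow> 'b \<Rightarrow> 'a) \<Rightarrow> bool" where
  "quotient_basis V W I b \<longleftrightarrow>
     (\<forall>i\<in>I. b i \<in> V) \<and>
     (\<forall>x\<in>V. \<exists>G c. finite G \<and> G \<subseteq> I \<and> (\<lambda>E. x E - (\<Sum>i\<in>G. c i * b i E)) \<in> W) \<and>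
     (\<forall>G c. finite G \<longrightarrow> G \<subseteq> I \<longrightarrow> (\<lambda>E. \<Sum>i\<in>G. c i * b i E) \<in> W \<longrightarrow> (\<forall>i\<in>G. c i = 0))"

definition qvar :: "'k::field poly fract" where
  "qvar = Fract [:0, 1:] 1"

definition is_subfield :: "'k::field set \<Rightarrow> bool" where
  "is_subfield F \<longleftrightarrow> 0 \<in> F \<and> 1 \<in> F \<and> (\<forall>x\<in>F. \<forall>y\<in>F. x + y \<in> F \<and> x * y \<in> F) \<and>
     (\<forall>x\<in>F. - x \<in> F \<and> inverse x \<in> F)"

definition transcendental_over :: "'k::field \<Rightarrow> 'k set \<Rightarrow> bool" where
  "transcendental_over v F \<longleftrightarrow>
     (\<forall>p. p \<noteq> 0 \<longrightarrow> (\<forall>i. coeff p i \<in> F) \<longrightarrow> poly p v \<noteq> 0)"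

definition Jindex :: "nat \<Rightarrow> (nat \<times> (nat \<Rightarrow> nat) \<times> (nat \<Rightarrow> nat) \<times> nat) set" where
  "Jindex n = {(t, S1, S2, \<tau>). t > 0 \<and> S1 \<in> Ann n \<inter> Inv n t \<and> S2 \<in> Ann n \<inter> Inv n t \<and> \<tau> < t}"

end

(*
  For odd n every involution of {1..n} has a fixed point, and a diagram is determined by its top
  and bottom involutions and its winding number. Non-crossing means that every arc nests the nodes
  under it and that vertical edges preserve order. Hence, for an annular involution, an arc runs
  inside the window exactly when no fixed point lies between its ends and around the back of the
  cylinder otherwise, and the vertical edges join the free top and bottom nodes, each enumerated
  increasingly over the integers, by a shift k |-> k + w whose amount w is the winding number.
  Conversely these prescriptions always define a diagram, so [S1, S2, w] is well defined.

  Modulo omega(q), [S1, S2, w] is q^(-s) [S1, S2, w + t s], so every diagram is congruent to a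
  multiple of some [S1, S2, tau] with 0 <= tau < t. For independence, the functional sending
  [A, B, tau + t k] to q^(-k) and every other diagram to 0 vanishes on omega(q) and is dual to
  the proposed basis.
*)

theory Submission
  imports Defs
begin

lemma red_int_eq: "0 < n \<Longrightarrow> int (red n z) = (z - 1) mod int n + 1"
  unfolding red_def by simp

lemma red_in_window: "0 < n \<Longrightarrow> red n z \<in> {1..n}"
  using red_int_eq[of n z] pos_mod_bound[of "int n" "z - 1"] pos_mod_sign[of "int n" "z - 1"]
  by (auto simp del: pos_mod_bound pos_mod_sign)

lemma red_decomp: "0 < n \<Longrightarrow> z = int (red n z) + ((z - 1) div int n) * int n"
  using red_int_eq[of n z] div_mult_mod_eq[of "z - 1" "int n"] by linarith

lemma red_add_mult: "red n (z + k * int n) = red n z"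
  unfolding red_def by (metis diff_add_eq mod_mult_self1)

lemma red_of_int: "1 \<le> z \<Longrightarrow> z \<le> int n \<Longrightarrow> red n z = nat z"
  unfolding red_def by simp

lemma red_of_nat: "i \<in> {1..n} \<Longrightarrow> red n (int i) = i"
  using red_of_int[of "int i" n] by simp

lemma red_eq_imp_shift: "0 < n \<Longrightarrow> red n a = red n b \<Longrightarrow> \<exists>k. a = b + k * int n"
  using red_decomp[of n a] red_decomp[of n b]
  by (metis add.commute add_diff_cancel_left' diff_add_eq left_diff_distrib)

section \<open>Noncrossing matchings via nesting\<close>

definition arcs_nested :: "diag \<Rightarrow> bool \<Rightarrow> bool" where
  "arcs_nested D r \<longleftrightarrow> (\<forall>z y w. D (z, r) = (y, r) \<longrightarrow> z < w \<longrightarrow> w < y \<longrightarrow>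
      (\<exists>u. D (w, r) = (u, r) \<and> z < u \<and> u < y))"

definition verticals_monotone :: "diag \<Rightarrow> bool" where
  "verticals_monotone D \<longleftrightarrow> (\<forall>q q' p p'. D (q, False) = (p, True) \<longrightarrow>
      D (q', False) = (p', True) \<longrightarrow> q < q' \<longrightarrow> p < p')"

lemma bd_less_simps [simp]:
  "bd_less (a, False) (b, False) \<longleftrightarrow> a < b"
  "bd_less (a, False) (b, True)"
  "\<not> bd_less (a, True) (b, False)"
  "bd_less (a, True) (b, True) \<longleftrightarrow> b < a"
  unfolding bd_less_def by auto

context
  fixes D :: diag
  assumes invol: "\<And>x. D (D x) = x" and no_fix: "\<And>x. D x \<noteq> x"
begin

lemma noncrossing_imp_arcs_nested:
  assumes nc: "noncrossing D"
  shows "arcs_nested D r"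
  unfolding arcs_nested_def
proof (intro allI impI)
  have ni: "\<not> (bd_less a c \<and> bd_less c (D a) \<and> bd_less (D a) (D c))" for a c
    using nc unfolding noncrossing_def by blast
  fix z y w assume zy: "D (z, r) = (y, r)" and zw: "z < w" and wy: "w < y"
  have yz: "D (y, r) = (z, r)" using invol[of "(z, r)"] zy by simp
  obtain u r' where wu: "D (w, r) = (u, r')" by fastforce
  have uw: "D (u, r') = (w, r)" using invol[of "(w, r)"] wu by simp
  have same_row: "r' = r"
  proof (rule ccontr)
    assume "r' \<noteq> r"
    then show False
    proof (cases r)
      case True
      then show False using ni[of "(u, r')" "(y, r)"] \<open>r' \<noteq> r\<close> uw yz zw wy by simp
    next
      case False
      then show False using ni[of "(z, r)" "(w, r)"] \<open>r' \<noteq> r\<close> zy wu zw wy by simp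
    qed
  qed
  then have wu: "D (w, r) = (u, r)" and uw: "D (u, r) = (w, r)" using wu uw by simp_all
  have "u \<noteq> z" "u \<noteq> y" using uw yz zy zw wy by auto
  moreover have "\<not> y < u"
  proof
    assume "y < u"
    then show False
      using ni[of "(u, r)" "(y, r)"] ni[of "(z, r)" "(w, r)"] uw yz zy wu zw wy
      by (cases r) simp_all
  qed
  moreover have "\<not> u < z"
  proof
    assume "u < z"
    then show False
      using ni[of "(y, r)" "(w, r)"] ni[of "(u, r)" "(z, r)"] uw yz zy wu zw wy
      by (cases r) simp_all
  qed
  ultimately show "\<exists>u. D (w, r) = (u, r) \<and> z < u \<and> u < y"
    using wu by force
qed

lemma noncrossing_imp_verticals_monotone:
  assumes nc: "noncrossing D"
  shows "verticals_monotone D"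
  unfolding verticals_monotone_def
proof (intro allI impI)
  fix q q' p p' assume qp: "D (q, False) = (p, True)" and qp': "D (q', False) = (p', True)"
    and qq': "q < q'"
  have "p \<noteq> p'" using invol[of "(q, False)"] invol[of "(q', False)"] qp qp' qq' by auto
  moreover have "\<not> p' < p"
  proof
    assume "p' < p"
    then have "bd_less (q, False) (q', False) \<and> bd_less (q', False) (D (q, False))
        \<and> bd_less (D (q, False)) (D (q', False))"
      using qp qp' qq' by simp
    then show False using nc unfolding noncrossing_def by blast
  qed
  ultimately show "p < p'" by simp
qed

lemma nested_imp_noncrossing:
  assumes T: "arcs_nested D True" and B: "arcs_nested D False" and V: "verticals_monotone D"
  shows "noncrossing D"
  unfolding noncrossing_def
proof
  assume "\<exists>a c. bd_less a c \<and> bd_less c (D a) \<and> bd_less (D a) (D c)"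
  then obtain a1 a2 c1 c2 where ac: "bd_less (a1, a2) (c1, c2)"
    and cb: "bd_less (c1, c2) (D (a1, a2))" and bd: "bd_less (D (a1, a2)) (D (c1, c2))"
    by auto
  obtain b1 b2 where b: "D (a1, a2) = (b1, b2)" by fastforce
  obtain d1 d2 where d: "D (c1, c2) = (d1, d2)" by fastforce
  have b': "D (b1, b2) = (a1, a2)" and d': "D (d1, d2) = (c1, c2)"
    using invol[of "(a1, a2)"] invol[of "(c1, c2)"] b d by simp_all
  consider "a2" "c2" "b2" "d2" | "\<not> a2" "\<not> b2" "\<not> c2" | "\<not> a2" "b2" "\<not> c2" "d2"
    | "\<not> a2" "b2" "c2" "d2"
    using ac cb bd b d by (cases a2; cases b2; cases c2; cases d2) simp_all
  then show False
  proof cases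
    case 1
    then obtain u where "D (c1, True) = (u, True)" "b1 < u"
      using T b' ac cb bd b d unfolding arcs_nested_def by fastforce
    then show False using d bd b 1 by simp
  next
    case 2
    then obtain u where "D (c1, False) = (u, False)" "u < b1"
      using B b ac cb unfolding arcs_nested_def by fastforce
    then show False using d bd b 2 by simp
  next
    case 3
    then show False using V b d ac bd unfolding verticals_monotone_def by force
  next
    case 4
    then obtain u where "D (b1, True) = (u, True)"
      using T d' cb bd b d unfolding arcs_nested_def by fastforce
    then show False using b' 4 by simp
  qed
qed

end

section \<open>The row involutions of a diagram\<close>

definition row_inv :: "nat \<Rightarrow> diag \<Rightarrow> bool \<Rightarrow> nat \<Rightarrow> nat" where
  "row_inv n D r i =
     (if i \<in> {1..n} \<and> snd (D (int i, r)) = r then red n (fst (D (int i, r))) else i)"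

lemma topS_eq_row_inv: "topS n D = row_inv n D True"
  unfolding topS_def row_inv_def by auto

lemma botS_eq_row_inv: "botS n D = row_inv n D False"
  unfolding botS_def row_inv_def by auto

lemma involution_on_interval_closed:
  assumes inv: "involution_on n S" and ij: "1 \<le> i" "j \<le> n"
    and cases: "(\<forall>x\<in>{i..j}. S x \<in> {i..j} \<and> S x \<noteq> x) \<or>
      (\<forall>x\<in>{1..n} - {i..j}. S x \<notin> {i..j} \<and> S x \<noteq> x)"
  shows "S ` {i..j} = {i..j} \<and> ({k \<in> {i..j}. S k = k} = {} \<or> fixed_points n S \<subseteq> {i..j})"
proof -
  have S_in: "S x \<in> {1..n}" and SS: "S (S x) = x" if "x \<in> {1..n}" for x
    using inv that unfolding involution_on_def by auto
  have into: "S x \<in> {i..j}" if x: "x \<in> {i..j}" for x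
    using cases
  proof
    assume out: "\<forall>x\<in>{1..n} - {i..j}. S x \<notin> {i..j} \<and> S x \<noteq> x"
    have x_win: "x \<in> {1..n}" using x ij by auto
    show ?thesis
    proof (rule ccontr)
      assume "S x \<notin> {i..j}"
      then have "S (S x) \<notin> {i..j}" using out S_in[OF x_win] by blast
      then show False using SS[OF x_win] x by simp
    qed
  qed (use x in blast)
  have "{i..j} \<subseteq> S ` {i..j}"
  proof
    fix x assume "x \<in> {i..j}"
    then have "x = S (S x)" "S x \<in> {i..j}" using SS[of x] into[of x] ij by auto
    then show "x \<in> S ` {i..j}" by blast
  qed
  then show ?thesis using into cases unfolding fixed_points_def by blast
qed

lemma card_involution_without_fixpoints_even:
  assumes "finite N" "\<forall>x\<in>N. S x \<in> N \<and> S x \<noteq> x \<and> S (S x) = x"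
  shows "even (card N)"
  using assms
proof (induction N rule: finite_psubset_induct)
  case (psubset N)
  show ?case
  proof (cases "N = {}")
    case False
    then obtain x where x: "x \<in> N" by blast
    let ?N' = "N - {x, S x}"
    have "\<forall>z\<in>?N'. S z \<in> ?N' \<and> S z \<noteq> z \<and> S (S z) = z"
      using psubset.prems x by (metis Diff_iff insert_iff singletonD)
    moreover have "?N' \<subset> N" using x by auto
    ultimately have "even (card ?N')" using psubset.IH by blast
    moreover have "card N = card ?N' + 2"
    proof -
      have "{x, S x} \<subseteq> N" "card {x, S x} = 2" using x psubset.prems by auto
      then show ?thesis
        using card_Diff_subset[of "{x, S x}" N] psubset.hyps card_mono[of N "{x, S x}"]
        by (simp add: finite_subset)
    qed
    ultimately show ?thesis by simp
  qed simp
qed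

lemma odd_involution_has_fixed_point:
  assumes "odd n" "involution_on n S"
  shows "card (fixed_points n S) > 0"
proof -
  let ?N = "{i \<in> {1..n}. S i \<noteq> i}"
  have "\<forall>x\<in>?N. S x \<in> ?N \<and> S x \<noteq> x \<and> S (S x) = x"
  proof
    fix x assume x: "x \<in> ?N"
    then have "S x \<in> {1..n}" "S (S x) = x" using assms(2) unfolding involution_on_def by auto
    then show "S x \<in> ?N \<and> S x \<noteq> x \<and> S (S x) = x" using x by auto
  qed
  then have "even (card ?N)" by (intro card_involution_without_fixpoints_even[of ?N S]) simp_all
  moreover have "card (fixed_points n S) + card ?N = n"
  proof -
    have "fixed_points n S \<union> ?N = {1..n}" "fixed_points n S \<inter> ?N = {}"
      unfolding fixed_points_def by auto
    then show ?thesis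
      using card_Un_disjoint[of "fixed_points n S" ?N] unfolding fixed_points_def by simp
  qed
  ultimately show ?thesis using assms(1) by (intro gr0I) auto
qed

locale affine_diagram =
  fixes n :: nat and D :: diag
  assumes diagram: "is_diagram n D" and n_pos: "0 < n"
begin

lemma no_fix: "D x \<noteq> x"
  using diagram unfolding is_diagram_def by blast

lemma invol [simp]: "D (D x) = x"
  using diagram unfolding is_diagram_def by blast

lemma shift_period: "D (i + int n, r) = (fst (D (i, r)) + int n, snd (D (i, r)))"
  using diagram unfolding is_diagram_def by blast

lemma periodic_nat: "D (i + int k * int n, r) = (fst (D (i, r)) + int k * int n, snd (D (i, r)))"
proof (induction k)
  case (Suc k)
  have "D (i + int (Suc k) * int n, r) = D ((i + int k * int n) + int n, r)"
    by (simp add: algebra_simps)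
  also have "\<dots> = (fst (D (i + int k * int n, r)) + int n, snd (D (i + int k * int n, r)))"
    by (rule shift_period)
  finally show ?case using Suc by (simp add: algebra_simps)
qed simp

lemma periodic: "D (i + k * int n, r) = (fst (D (i, r)) + k * int n, snd (D (i, r)))"
proof (cases "k \<ge> 0")
  case True
  then show ?thesis using periodic_nat[of i "nat k"] by simp
next
  case False
  then have "D (i, r) = D ((i + k * int n) + int (nat (- k)) * int n, r)" by simp
  then have "D (i, r) = (fst (D (i + k * int n, r)) - k * int n, snd (D (i + k * int n, r)))"
    using periodic_nat[of "i + k * int n" "nat (- k)" r] False by simp
  then show ?thesis by (simp add: prod_eq_iff)
qed

lemma at_red:
  "D (z, r) = (fst (D (int (red n z), r)) + ((z - 1) div int n) * int n, snd (D (int (red n z), r)))"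
  using periodic[of "int (red n z)" "(z - 1) div int n" r]
  by (simp only: red_decomp[OF n_pos, of z, symmetric])

lemma noncrossing: "noncrossing D"
  using diagram unfolding is_diagram_def by blast

lemma arc_nested:
  "D (z, r) = (y, r) \<Longrightarrow> z < w \<Longrightarrow> w < y \<Longrightarrow> \<exists>u. D (w, r) = (u, r) \<and> z < u \<and> u < y"
  using noncrossing_imp_arcs_nested[OF invol no_fix noncrossing, of r]
  unfolding arcs_nested_def by blast

lemma verticals_monotone: "verticals_monotone D"
  using noncrossing_imp_verticals_monotone[OF invol no_fix noncrossing] .

lemma arc_shorter_than_period:
  assumes zy: "D (z, r) = (y, r)" and "z < y"
  shows "y - z < int n"
proof (rule ccontr)
  assume "\<not> y - z < int n"
  then consider "z + int n = y" | "z + int n < y" by linarith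
  then show False
  proof cases
    case 1
    then have "D (y, r) = (y + int n, r)" using shift_period[of z r] zy by simp
    then show False using invol[of "(z, r)"] zy n_pos 1 by simp
  next
    case 2
    then obtain u where "D (z + int n, r) = (u, r)" "u < y"
      using arc_nested[OF zy, of "z + int n"] n_pos by auto
    then show False using shift_period[of z r] zy by simp
  qed
qed

lemma arc_length:
  assumes "D (z, r) = (y, r)"
  shows "y \<noteq> z" "\<bar>y - z\<bar> < int n"
proof -
  show "y \<noteq> z" using assms no_fix[of "(z, r)"] by auto
  have "D (y, r) = (z, r)" using invol[of "(z, r)"] assms by simp
  then show "\<bar>y - z\<bar> < int n"
    using arc_shorter_than_period[OF assms] arc_shorter_than_period[of y r z] \<open>y \<noteq> z\<close>
    by (cases "z < y") auto
qed

lemma arc_ends_red_ne: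
  assumes zy: "D (z, r) = (y, r)"
  shows "red n y \<noteq> red n z"
proof
  assume "red n y = red n z"
  then obtain k where k: "y = z + k * int n" using red_eq_imp_shift[OF n_pos] by blast
  then have "(-1) * int n < k * int n" "k * int n < 1 * int n" using arc_length(2)[OF zy] by auto
  then have "k = 0" using n_pos by (simp only: mult_less_cancel_right_pos of_nat_0_less_iff)
  then show False using arc_length(1)[OF zy] k by simp
qed

lemma row_inv_red:
  assumes zu: "D (z, r) = (u, r)"
  shows "row_inv n D r (red n z) = red n u"
proof -
  let ?a = "(z - 1) div int n"
  have "D (int (red n z), r) = (u + (- ?a) * int n, r)"
    using at_red[of z r] zu by (auto simp: prod_eq_iff)
  then show ?thesis
    using red_in_window[OF n_pos] red_add_mult[of n u "- ?a"] unfolding row_inv_def by simp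
qed

lemma row_inv_fixed_iff: "row_inv n D r (red n z) = red n z \<longleftrightarrow> snd (D (z, r)) \<noteq> r"
proof (cases "snd (D (z, r)) = r")
  case True
  then obtain u where zu: "D (z, r) = (u, r)" by (cases "D (z, r)") auto
  then show ?thesis using row_inv_red[OF zu] arc_ends_red_ne[OF zu] by simp
next
  case False
  then show ?thesis using at_red[of z r] unfolding row_inv_def by auto
qed

lemma row_inv_out: "i \<notin> {1..n} \<Longrightarrow> row_inv n D r i = i"
  unfolding row_inv_def by auto

lemma row_inv_in_window: "i \<in> {1..n} \<Longrightarrow> row_inv n D r i \<in> {1..n}"
  unfolding row_inv_def using red_in_window[OF n_pos] by auto

lemma row_inv_invol:
  assumes i: "i \<in> {1..n}"
  shows "row_inv n D r (row_inv n D r i) = i"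
proof (cases "snd (D (int i, r)) = r")
  case True
  then obtain y where iy: "D (int i, r) = (y, r)" by (cases "D (int i, r)") auto
  then have "D (y, r) = (int i, r)" using invol[of "(int i, r)"] by simp
  then show ?thesis
    using row_inv_red[OF iy] row_inv_red[of y r "int i"] red_of_nat[OF i] by simp
qed (simp add: row_inv_def)

lemma row_inv_involution_on: "involution_on n (row_inv n D r)"
  unfolding involution_on_def using row_inv_in_window row_inv_invol row_inv_out by blast

lemma row_inv_under_arc:
  assumes "D (a, r) = (b, r)" "a < w" "w < b"
  shows "\<exists>u. a < u \<and> u < b \<and> row_inv n D r (red n w) = red n u \<and> red n u \<noteq> red n w"
  using arc_nested[OF assms] row_inv_red arc_ends_red_ne by blast

lemma row_inv_inner_arc:
  assumes ij: "1 \<le> i" "i < j" "j \<le> n" and arc: "D (int i, r) = (int j, r)"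
  shows "\<forall>x\<in>{i..j}. row_inv n D r x \<in> {i..j} \<and> row_inv n D r x \<noteq> x"
proof
  fix x assume x: "x \<in> {i..j}"
  have win: "i \<in> {1..n}" "j \<in> {1..n}" "x \<in> {1..n}" using ij x by auto
  have ji: "D (int j, r) = (int i, r)" using invol[of "(int i, r)"] arc by simp
  consider "x = i" | "x = j" | "i < x" "x < j" using x by fastforce
  then show "row_inv n D r x \<in> {i..j} \<and> row_inv n D r x \<noteq> x"
  proof cases
    case 1
    then show ?thesis using row_inv_red[OF arc] red_of_nat win ij by simp
  next
    case 2
    then show ?thesis using row_inv_red[OF ji] red_of_nat win ij by simp
  next
    case 3
    then obtain u where u: "int i < u" "u < int j" "row_inv n D r (red n (int x)) = red n u"
        "red n u \<noteq> red n (int x)"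
      using row_inv_under_arc[OF arc, of "int x"] by auto
    then have "red n u = nat u" using red_of_int[of u n] ij by simp
    then show ?thesis using u red_of_nat[OF win(3)] by auto
  qed
qed

lemma row_inv_outer_arc:
  assumes ij: "1 \<le> i" "i < j" "j \<le> n" and arc: "D (int j - int n, r) = (int i, r)"
  shows "\<forall>x\<in>{1..n} - {i..j}. row_inv n D r x \<notin> {i..j} \<and> row_inv n D r x \<noteq> x"
proof
  fix x assume x: "x \<in> {1..n} - {i..j}"
  define w where "w = (if x < i then int x else int x - int n)"
  have w: "int j - int n < w" "w < int i" using x ij unfolding w_def by auto
  have "red n w = x"
    using red_of_nat[of x n] red_add_mult[of n "int x" "-1"] x unfolding w_def by auto
  moreover obtain u where u: "int j - int n < u" "u < int i" "row_inv n D r (red n w) = red n u"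
      "red n u \<noteq> red n w"
    using row_inv_under_arc[OF arc w] by blast
  moreover have "red n u \<notin> {i..j}"
  proof (cases "1 \<le> u")
    case True
    then show ?thesis using red_of_int[of u n] u ij by simp
  next
    case False
    then have "red n u = nat (u + int n)"
      using red_add_mult[of n u 1] red_of_int[of "u + int n" n] u ij by simp
    then show ?thesis using u False by auto
  qed
  ultimately show "row_inv n D r x \<notin> {i..j} \<and> row_inv n D r x \<noteq> x" by simp
qed

lemma row_inv_annular: "row_inv n D r \<in> Ann n"
proof -
  let ?S = "row_inv n D r"
  have "?S ` {i..j} = {i..j} \<and> ({k \<in> {i..j}. ?S k = k} = {} \<or> fixed_points n ?S \<subseteq> {i..j})"
    if ij: "1 \<le> i" "i < j" "j \<le> n" and Sij: "?S i = j" for i j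
  proof (rule involution_on_interval_closed[OF row_inv_involution_on ij(1,3)])
    have i: "i \<in> {1..n}" using ij by auto
    have "snd (D (int i, r)) = r"
      using row_inv_fixed_iff[of r "int i"] red_of_nat[OF i] Sij ij by auto
    then obtain y where iy: "D (int i, r) = (y, r)" by (cases "D (int i, r)") auto
    have "red n y = red n (int j)" using row_inv_red[OF iy] red_of_nat[OF i] red_of_nat[of j n] Sij ij by simp
    then obtain k where k: "y = int j + k * int n" using red_eq_imp_shift[OF n_pos] by blast
    have "(-2) * int n < k * int n \<and> k * int n < 1 * int n"
      using arc_length(2)[OF iy] k ij by (simp only: abs_less_iff) linarith
    then have "-2 < k" "k < 1" using n_pos by (simp_all only: mult_less_cancel_right_pos of_nat_0_less_iff)
    then consider "k = 0" | "k = -1" by linarith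
    then show "(\<forall>x\<in>{i..j}. ?S x \<in> {i..j} \<and> ?S x \<noteq> x) \<or>
        (\<forall>x\<in>{1..n} - {i..j}. ?S x \<notin> {i..j} \<and> ?S x \<noteq> x)"
    proof cases
      case 1
      then show ?thesis using row_inv_inner_arc[OF ij] iy k by simp
    next
      case 2
      then have "D (int j - int n, r) = (int i, r)" using invol[of "(int i, r)"] iy k by simp
      then show ?thesis using row_inv_outer_arc[OF ij] by simp
    qed
  qed
  then show ?thesis unfolding Ann_def using row_inv_involution_on by blast
qed

lemma card_fixed_row_inv_le:
  "card (fixed_points n (row_inv n D r)) \<le> card (fixed_points n (row_inv n D (\<not> r)))"
proof (rule card_inj_on_le)
  let ?F = "fixed_points n (row_inv n D r)"
  let ?f = "\<lambda>i. red n (fst (D (int i, r)))"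
  have vertical: "D (int i, r) = (fst (D (int i, r)), \<not> r)" if "i \<in> ?F" for i
    using that row_inv_fixed_iff[of r "int i"] red_of_nat[of i n]
    unfolding fixed_points_def by (cases "D (int i, r)") auto
  show "inj_on ?f ?F"
  proof (rule inj_onI)
    fix i i' assume i: "i \<in> ?F" and i': "i' \<in> ?F" and eq: "?f i = ?f i'"
    obtain k where k: "fst (D (int i', r)) = fst (D (int i, r)) + k * int n"
      using red_eq_imp_shift[OF n_pos eq[symmetric]] by blast
    have "D (fst (D (int i', r)), \<not> r) = (int i + k * int n, r)"
      using k periodic[of "fst (D (int i, r))" k "\<not> r"] invol[of "(int i, r)"] vertical[OF i] by simp
    then have ii': "int i' = int i + k * int n"
      using invol[of "(int i', r)"] vertical[OF i'] by simp
    have "1 \<le> i" "i \<le> n" "1 \<le> i'" "i' \<le> n" using i i' unfolding fixed_points_def by auto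
    then have "(-1) * int n < k * int n" "k * int n < 1 * int n" using ii' by linarith+
    then have "k = 0" using n_pos by (simp only: mult_less_cancel_right_pos of_nat_0_less_iff)
    then show "i = i'" using ii' by simp
  qed
  show "?f ` ?F \<subseteq> fixed_points n (row_inv n D (\<not> r))"
  proof
    fix z assume "z \<in> ?f ` ?F"
    then obtain i where i: "i \<in> ?F" and z: "z = ?f i" by blast
    have "D (fst (D (int i, r)), \<not> r) = (int i, r)" using invol[of "(int i, r)"] vertical[OF i] by simp
    then show "z \<in> fixed_points n (row_inv n D (\<not> r))"
      using z row_inv_fixed_iff[of "\<not> r" "fst (D (int i, r))"] red_in_window[OF n_pos]
      unfolding fixed_points_def by simp
  qed
qed (simp add: fixed_points_def)

lemma card_fixed_topS_eq_botS:
  "card (fixed_points n (topS n D)) = card (fixed_points n (botS n D))"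
  using card_fixed_row_inv_le[of True] card_fixed_row_inv_le[of False]
  unfolding topS_eq_row_inv botS_eq_row_inv by simp

lemma topS_botS_classes:
  assumes "odd n"
  defines "t \<equiv> card (fixed_points n (topS n D))"
  shows "t > 0" "topS n D \<in> Ann n \<inter> Inv n t" "botS n D \<in> Ann n \<inter> Inv n t"
  using odd_involution_has_fixed_point[OF assms(1) row_inv_involution_on]
    row_inv_annular row_inv_involution_on card_fixed_topS_eq_botS
  unfolding t_def Inv_def topS_eq_row_inv botS_eq_row_inv by auto

end

section \<open>The arcs and vertical edges prescribed by an annular involution\<close>

definition fixed_list :: "nat \<Rightarrow> (nat \<Rightarrow> nat) \<Rightarrow> nat list" where
  "fixed_list n S = sorted_list_of_set (fixed_points n S)"

text \<open>Free nodes are the lifts to \<open>\<int>\<close> of the fixed points of \<open>S\<close>, i.e.\ the ends of vertical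
  edges; \<open>free_node n S\<close> enumerates them increasingly, \<open>free_node n S 0\<close> being the least fixed
  point in the window.\<close>

definition free_node :: "nat \<Rightarrow> (nat \<Rightarrow> nat) \<Rightarrow> int \<Rightarrow> int" where
  "free_node n S k = int (fixed_list n S ! nat (k mod int (card (fixed_points n S))))
     + (k div int (card (fixed_points n S))) * int n"

definition is_free :: "nat \<Rightarrow> (nat \<Rightarrow> nat) \<Rightarrow> int \<Rightarrow> bool" where
  "is_free n S z \<longleftrightarrow> S (red n z) = red n z"

definition free_index :: "nat \<Rightarrow> (nat \<Rightarrow> nat) \<Rightarrow> int \<Rightarrow> int" where
  "free_index n S = inv (free_node n S)"

definition no_fixed_between :: "(nat \<Rightarrow> nat) \<Rightarrow> nat \<Rightarrow> nat \<Rightarrow> bool" where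
  "no_fixed_between S a b \<longleftrightarrow> (\<forall>k. a \<le> k \<and> k \<le> b \<longrightarrow> S k \<noteq> k)"

text \<open>The arc at a node whose residue \<open>i\<close> is not fixed joins it to a lift of \<open>S i\<close>: inside the
  window if no fixed point lies between \<open>i\<close> and \<open>S i\<close>, and otherwise (all fixed points then lie
  between them, by annularity) around the back of the cylinder.\<close>

definition arc_end :: "nat \<Rightarrow> (nat \<Rightarrow> nat) \<Rightarrow> int \<Rightarrow> int" where
  "arc_end n S z = (let i = red n z; s = S i in
     if no_fixed_between S (min i s) (max i s) then z - int i + int s
     else if i < s then z - int i + int s - int n else z - int i + int s + int n)"

locale annular_involution =
  fixes n :: nat and S :: "nat \<Rightarrow> nat"
  assumes n_pos: "0 < n" and annular: "S \<in> Ann n" and involution: "involution_on n S"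
    and has_fixed: "card (fixed_points n S) > 0"
begin

abbreviation t :: nat where "t \<equiv> card (fixed_points n S)"

lemma S_in_window: "i \<in> {1..n} \<Longrightarrow> S i \<in> {1..n}"
  using involution unfolding involution_on_def by blast

lemma S_invol: "i \<in> {1..n} \<Longrightarrow> S (S i) = i"
  using involution unfolding involution_on_def by blast

lemma S_annular:
  "1 \<le> i \<Longrightarrow> i < j \<Longrightarrow> j \<le> n \<Longrightarrow> S i = j \<Longrightarrow>
     S ` {i..j} = {i..j} \<and> ({k \<in> {i..j}. S k = k} = {} \<or> fixed_points n S \<subseteq> {i..j})"
  using annular unfolding Ann_def by blast

lemma fixed_list_nth:
  assumes "r < t"
  shows "fixed_list n S ! r \<in> {1..n}" "S (fixed_list n S ! r) = fixed_list n S ! r"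
proof -
  have "finite (fixed_points n S)" unfolding fixed_points_def by simp
  then have "fixed_list n S ! r \<in> fixed_points n S"
    using assms nth_mem[of r "fixed_list n S"] unfolding fixed_list_def by simp
  then show "fixed_list n S ! r \<in> {1..n}" "S (fixed_list n S ! r) = fixed_list n S ! r"
    unfolding fixed_points_def by auto
qed

lemma mod_t_less: "nat (k mod int t) < t"
  using has_fixed by (simp add: nat_less_iff)

lemma free_node_bounds:
  "1 + (k div int t) * int n \<le> free_node n S k \<and> free_node n S k \<le> int n + (k div int t) * int n"
  using fixed_list_nth(1)[OF mod_t_less] unfolding free_node_def by auto

lemma free_node_strict_mono: "strict_mono (free_node n S)"
proof (rule strict_monoI)
  fix k k' :: int assume kk': "k < k'"
  let ?a = "k div int t" and ?a' = "k' div int t"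
  have "?a \<le> ?a'" using kk' has_fixed by (intro zdiv_mono1) auto
  then consider "?a = ?a'" | "?a + 1 \<le> ?a'" by linarith
  then show "free_node n S k < free_node n S k'"
  proof cases
    case 1
    have "k = ?a * int t + k mod int t" "k' = ?a * int t + k' mod int t"
      by (simp, simp only: 1, simp)
    then have "k mod int t < k' mod int t" using kk' by linarith
    moreover have "0 \<le> k mod int t" using has_fixed by simp
    ultimately have lt: "nat (k mod int t) < nat (k' mod int t)" by simp
    have sorted: "sorted_wrt (<) (fixed_list n S)" and len: "length (fixed_list n S) = t"
      unfolding fixed_list_def by simp_all
    have "fixed_list n S ! nat (k mod int t) < fixed_list n S ! nat (k' mod int t)"
      using sorted_wrt_nth_less[OF sorted lt] mod_t_less len by simp
    then show ?thesis using 1 unfolding free_node_def by simp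
  next
    case 2
    then have "?a * int n + int n \<le> ?a' * int n"
      using mult_right_mono[OF 2, of "int n"] by (simp add: distrib_right)
    then show ?thesis using free_node_bounds[of k] free_node_bounds[of k'] by linarith
  qed
qed

lemma free_node_less_iff: "free_node n S k < free_node n S k' \<longleftrightarrow> k < k'"
  using free_node_strict_mono by (simp add: strict_mono_less)

lemma free_node_inj: "inj (free_node n S)"
  using free_node_strict_mono strict_mono_imp_inj_on by blast

lemma free_node_pos_iff: "1 \<le> free_node n S k \<longleftrightarrow> 0 \<le> k"
proof
  assume "0 \<le> k"
  then have "0 \<le> (k div int t) * int n" using has_fixed by (simp add: div_int_pos_iff)
  then show "1 \<le> free_node n S k" using free_node_bounds[of k] by linarith
next
  assume pos: "1 \<le> free_node n S k"
  show "0 \<le> k"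
  proof (rule ccontr)
    assume "\<not> 0 \<le> k"
    then have "k div int t < 0" using has_fixed by (intro div_neg_pos_less0) auto
    then have "(k div int t) * int n + int n \<le> 0"
      using mult_right_mono[of "k div int t + 1" 0 "int n"] by (simp add: distrib_right)
    then show False using free_node_bounds[of k] pos by linarith
  qed
qed

lemma free_node_add_period: "free_node n S (k + a * int t) = free_node n S k + a * int n"
  using has_fixed unfolding free_node_def by (simp add: distrib_right)

lemma red_free_node: "red n (free_node n S k) = fixed_list n S ! nat (k mod int t)"
  using red_add_mult red_of_nat[OF fixed_list_nth(1)[OF mod_t_less]] unfolding free_node_def
  by simp

lemma is_free_free_node: "is_free n S (free_node n S k)"
  unfolding is_free_def red_free_node using fixed_list_nth(2)[OF mod_t_less] .

lemma is_free_imp_free_node: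
  assumes "is_free n S z"
  shows "\<exists>k. free_node n S k = z"
proof -
  have "finite (fixed_points n S)" unfolding fixed_points_def by simp
  moreover have "red n z \<in> fixed_points n S"
    using assms red_in_window[OF n_pos] unfolding is_free_def fixed_points_def by simp
  ultimately obtain r where r: "r < t" "fixed_list n S ! r = red n z"
    unfolding fixed_list_def by (metis in_set_conv_nth length_sorted_list_of_set set_sorted_list_of_set)
  define k where "k = ((z - 1) div int n) * int t + int r"
  have "k mod int t = int r" "k div int t = (z - 1) div int n" unfolding k_def using r(1) by simp_all
  then have "free_node n S k = z" using r red_decomp[OF n_pos, of z] unfolding free_node_def by simp
  then show ?thesis by blast
qed

lemma range_free_node: "range (free_node n S) = {z. is_free n S z}"
  using is_free_free_node is_free_imp_free_node by blast

lemma is_free_add_mult: "is_free n S (z + a * int n) \<longleftrightarrow> is_free n S z"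
  unfolding is_free_def red_add_mult ..

lemma is_free_of_nat: "i \<in> {1..n} \<Longrightarrow> is_free n S (int i) \<longleftrightarrow> S i = i"
  unfolding is_free_def red_of_nat by simp

lemma free_index_free_node [simp]: "free_index n S (free_node n S k) = k"
  unfolding free_index_def using free_node_inj by simp

lemma free_node_free_index: "is_free n S z \<Longrightarrow> free_node n S (free_index n S z) = z"
  unfolding free_index_def using is_free_imp_free_node by (metis f_inv_into_f rangeI)

lemma free_index_add_mult:
  assumes "is_free n S z"
  shows "free_index n S (z + a * int n) = free_index n S z + a * int t"
  using free_node_add_period[of "free_index n S z" a] free_node_free_index[OF assms]
  by (metis free_index_free_node)

lemma arc_end_add_mult: "arc_end n S (z + a * int n) = arc_end n S z + a * int n"
  unfolding arc_end_def Let_def red_add_mult by simp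

lemma arc_end_red: "arc_end n S z = arc_end n S (int (red n z)) + ((z - 1) div int n) * int n"
  using arc_end_add_mult[of "int (red n z)" "(z - 1) div int n"]
  by (simp only: red_decomp[OF n_pos, of z, symmetric])

lemma arc_end_of_nat:
  assumes "i \<in> {1..n}"
  shows "arc_end n S (int i) =
    (if no_fixed_between S (min i (S i)) (max i (S i)) then int (S i)
     else if i < S i then int (S i) - int n else int (S i) + int n)"
  unfolding arc_end_def Let_def red_of_nat[OF assms] by simp

lemma arc_end_window_node:
  assumes i: "i \<in> {1..n}" and si: "S i \<noteq> i"
  shows "arc_end n S (arc_end n S (int i)) = int i" "\<not> is_free n S (arc_end n S (int i))"
    "arc_end n S (int i) \<noteq> int i" "red n (arc_end n S (int i)) = S i"
proof -
  let ?s = "S i"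
  have s: "?s \<in> {1..n}" "S ?s = i" using S_in_window[OF i] S_invol[OF i] by auto
  have sym: "no_fixed_between S (min ?s (S ?s)) (max ?s (S ?s)) = no_fixed_between S (min i ?s) (max i ?s)"
    using s by (simp add: min.commute max.commute)
  show red: "red n (arc_end n S (int i)) = S i"
    using arc_end_of_nat[OF i] red_of_nat[OF s(1)] red_add_mult[of n "int ?s" "-1"]
      red_add_mult[of n "int ?s" 1] by auto
  then show "\<not> is_free n S (arc_end n S (int i))" unfolding is_free_def using s si by simp
  show "arc_end n S (int i) \<noteq> int i" using arc_end_of_nat[OF i] si s i by auto
  show "arc_end n S (arc_end n S (int i)) = int i"
    using arc_end_of_nat[OF i] arc_end_of_nat[OF s(1)] sym s si
      arc_end_add_mult[of "int ?s" "-1"] arc_end_add_mult[of "int ?s" 1] by auto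
qed

lemma arc_end_non_free:
  assumes nf: "\<not> is_free n S z"
  shows "arc_end n S (arc_end n S z) = z" "\<not> is_free n S (arc_end n S z)"
    "arc_end n S z \<noteq> z" "red n (arc_end n S z) = S (red n z)"
proof -
  let ?i = "red n z" and ?a = "(z - 1) div int n"
  have i: "?i \<in> {1..n}" using red_in_window[OF n_pos] .
  have si: "S ?i \<noteq> ?i" using nf unfolding is_free_def by simp
  have z: "arc_end n S z = arc_end n S (int ?i) + ?a * int n" by (rule arc_end_red)
  note base = arc_end_window_node[OF i si]
  show "arc_end n S (arc_end n S z) = z"
    using arc_end_add_mult base(1) red_decomp[OF n_pos, of z] unfolding z by simp
  show "\<not> is_free n S (arc_end n S z)" using z is_free_add_mult base(2) by simp
  show "arc_end n S z \<noteq> z" using base(3) red_decomp[OF n_pos, of z] unfolding z by simp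
  show "red n (arc_end n S z) = S (red n z)" using z red_add_mult base(4) by simp
qed

lemma fixed_point_exists: "\<exists>f\<in>{1..n}. S f = f"
proof -
  have "fixed_points n S \<noteq> {}" using has_fixed by auto
  then show ?thesis unfolding fixed_points_def by blast
qed

lemma arc_end_under_inner_arc:
  assumes ij: "1 \<le> i" "i < j" "j \<le> n" and Sij: "S i = j" and nf: "no_fixed_between S i j"
    and x: "i < x" "x < j"
  shows "S x \<noteq> x" "i < S x" "S x < j" "arc_end n S (int x) = int (S x)"
proof -
  have x_win: "x \<in> {1..n}" using ij x by auto
  have "S x \<in> {i..j}" using S_annular[OF ij Sij] x by auto
  moreover show "S x \<noteq> x" using nf x unfolding no_fixed_between_def by auto
  moreover have "S x \<noteq> i" "S x \<noteq> j"
    using S_invol[OF x_win] S_invol[of i] Sij x ij by auto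
  ultimately show "i < S x" "S x < j" by auto
  then have "no_fixed_between S (min x (S x)) (max x (S x))"
    using nf x unfolding no_fixed_between_def by (metis le_trans less_imp_le max_def min_def)
  then show "arc_end n S (int x) = int (S x)" using arc_end_of_nat[OF x_win] by simp
qed

lemma outside_fixed_pair:
  assumes ij: "1 \<le> i" "i < j" "j \<le> n" and Sij: "S i = j" and fx: "\<not> no_fixed_between S i j"
  shows "fixed_points n S \<subseteq> {i..j}"
    and "x \<in> {1..n} - {i..j} \<Longrightarrow> S x \<in> {1..n} - {i..j} \<and> S x \<noteq> x"
proof -
  have "{k \<in> {i..j}. S k = k} \<noteq> {}" using fx unfolding no_fixed_between_def by auto
  then have fixed: "fixed_points n S \<subseteq> {i..j}" and closed: "S ` {i..j} = {i..j}"
    using S_annular[OF ij Sij] by blast+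
  then show "fixed_points n S \<subseteq> {i..j}" by blast
  assume x: "x \<in> {1..n} - {i..j}"
  have "S x \<notin> {i..j}"
  proof
    assume "S x \<in> {i..j}"
    then have "S (S x) \<in> {i..j}" using closed by blast
    then show False using S_invol x by auto
  qed
  then show "S x \<in> {1..n} - {i..j} \<and> S x \<noteq> x"
    using S_in_window x fixed unfolding fixed_points_def by auto
qed

lemma arc_end_outside_fixed_pair:
  assumes ij: "1 \<le> i" "i < j" "j \<le> n" and Sij: "S i = j" and fx: "\<not> no_fixed_between S i j"
    and x: "x \<in> {1..n} - {i..j}"
  shows "arc_end n S (int x) = (if (x < i) = (S x < i) then int (S x)
     else if x < i then int (S x) - int n else int (S x) + int n)"
proof (cases "(x < i) = (S x < i)")
  case True
  have "S k \<noteq> k" if "min x (S x) \<le> k" "k \<le> max x (S x)" for k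
  proof -
    have "k \<in> {1..n} - {i..j}"
      using that True x outside_fixed_pair(2)[OF ij Sij fx x] by (auto simp: min_def max_def split: if_splits)
    then show ?thesis using outside_fixed_pair(1)[OF ij Sij fx] unfolding fixed_points_def by auto
  qed
  then show ?thesis using arc_end_of_nat[of x] True x unfolding no_fixed_between_def by auto
next
  case False
  obtain f where f: "f \<in> {i..j}" "S f = f"
    using fixed_point_exists outside_fixed_pair(1)[OF ij Sij fx] unfolding fixed_points_def by blast
  have "min x (S x) \<le> f \<and> f \<le> max x (S x)"
    using False x f outside_fixed_pair(2)[OF ij Sij fx x] by (auto simp: min_def max_def)
  then have "\<not> no_fixed_between S (min x (S x)) (max x (S x))"
    using f(2) unfolding no_fixed_between_def by blast
  moreover have "x < S x \<longleftrightarrow> x < i"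
    using False x outside_fixed_pair(2)[OF ij Sij fx x] by auto
  ultimately show ?thesis using arc_end_of_nat[of x] False x by auto
qed

lemma arc_end_under_outer_arc:
  assumes ij: "1 \<le> i" "i < j" "j \<le> n" and Sij: "S i = j" and fx: "\<not> no_fixed_between S i j"
    and w: "int j - int n < w" "w < int i"
  shows "\<not> is_free n S w \<and> int j - int n < arc_end n S w \<and> arc_end n S w < int i"
proof -
  define a where "a = (if 1 \<le> w then 0 else -1 :: int)"
  define x where "x = nat (w - a * int n)"
  have x: "x \<in> {1..n} - {i..j}" "x < i \<longleftrightarrow> a = 0" and wx: "w = int x + a * int n"
    using ij w unfolding x_def a_def by auto
  note Sx = outside_fixed_pair(2)[OF ij Sij fx x(1)]
  have "\<not> is_free n S (int x)" using is_free_of_nat[of x] Sx x(1) by auto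
  then have "\<not> is_free n S w" using wx is_free_add_mult by simp
  moreover have "arc_end n S w = arc_end n S (int x) + a * int n"
    using wx arc_end_add_mult by simp
  ultimately show ?thesis
    using arc_end_outside_fixed_pair[OF ij Sij fx x(1)] x Sx ij unfolding a_def by auto
qed

lemma arc_end_nested_in_window:
  assumes i: "i \<in> {1..n}" and si: "S i \<noteq> i"
  defines "lo \<equiv> min (int i) (arc_end n S (int i))" and "hi \<equiv> max (int i) (arc_end n S (int i))"
  assumes w: "lo < w" "w < hi"
  shows "\<not> is_free n S w \<and> lo < arc_end n S w \<and> arc_end n S w < hi"
proof -
  let ?s = "S i"
  have s: "?s \<in> {1..n}" "S ?s = i" using S_in_window[OF i] S_invol[OF i] by auto
  consider (inner) "no_fixed_between S (min i ?s) (max i ?s)"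
    | (right) "\<not> no_fixed_between S i ?s" "i < ?s" | (left) "\<not> no_fixed_between S ?s i" "?s < i"
    using si by (cases "i < ?s") (auto simp: min_def max_def)
  then show ?thesis
  proof cases
    case inner
    have ends: "1 \<le> min i ?s" "min i ?s < max i ?s" "max i ?s \<le> n" "S (min i ?s) = max i ?s"
      using i s si by (auto simp: min_def max_def)
    have lohi: "lo = int (min i ?s)" "hi = int (max i ?s)"
      using arc_end_of_nat[OF i] inner unfolding lo_def hi_def by simp_all
    define x where "x = nat w"
    have x: "w = int x" "min i ?s < x" "x < max i ?s" using w ends(1) unfolding lohi x_def by auto
    show ?thesis
      using arc_end_under_inner_arc[OF ends inner x(2,3)] x is_free_of_nat[of x] ends
      unfolding lohi by auto
  next
    case right
    have "lo = int ?s - int n" "hi = int i"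
      using arc_end_of_nat[OF i] right s unfolding lo_def hi_def by auto
    then show ?thesis
      using arc_end_under_outer_arc[of i ?s w] right i s w by simp
  next
    case left
    have lohi: "lo = int i" "hi = int ?s + int n"
      using arc_end_of_nat[OF i] left s i unfolding lo_def hi_def by auto
    then have "int i - int n < w + (-1) * int n" "w + (-1) * int n < int ?s" using w by auto
    then have "\<not> is_free n S (w + (-1) * int n) \<and> int i - int n < arc_end n S (w + (-1) * int n)
        \<and> arc_end n S (w + (-1) * int n) < int ?s"
      using arc_end_under_outer_arc[of ?s i] left i s by simp
    then show ?thesis unfolding is_free_add_mult arc_end_add_mult lohi by simp
  qed
qed

lemma arc_end_nested:
  assumes nf: "\<not> is_free n S z"
    and w: "min z (arc_end n S z) < w" "w < max z (arc_end n S z)"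
  shows "\<not> is_free n S w" "min z (arc_end n S z) < arc_end n S w" "arc_end n S w < max z (arc_end n S z)"
proof -
  define i where "i = red n z"
  define a where "a = (z - 1) div int n"
  have i: "i \<in> {1..n}" and si: "S i \<noteq> i"
    using red_in_window[OF n_pos] nf unfolding is_free_def i_def by auto
  have "z = int i + a * int n" using red_decomp[OF n_pos, of z] unfolding i_def a_def .
  then have min_max: "min z (arc_end n S z) = min (int i) (arc_end n S (int i)) + a * int n"
      "max z (arc_end n S z) = max (int i) (arc_end n S (int i)) + a * int n"
    by (simp_all add: arc_end_add_mult min_def max_def)
  have "\<not> is_free n S (w + (- a) * int n) \<and>
      min (int i) (arc_end n S (int i)) < arc_end n S (w + (- a) * int n) \<and>
      arc_end n S (w + (- a) * int n) < max (int i) (arc_end n S (int i))"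
    using w unfolding min_max by (intro arc_end_nested_in_window[OF i si]) simp_all
  then show "\<not> is_free n S w" "min z (arc_end n S z) < arc_end n S w"
      "arc_end n S w < max z (arc_end n S z)"
    unfolding is_free_add_mult arc_end_add_mult min_max by simp_all
qed

end

section \<open>The diagram with given row involutions and winding number\<close>

lemma (in annular_involution) row_inv_eq:
  assumes free: "\<And>z. is_free n S z \<Longrightarrow> snd (D (z, r)) \<noteq> r"
    and arc: "\<And>z. \<not> is_free n S z \<Longrightarrow> D (z, r) = (arc_end n S z, r)"
  shows "row_inv n D r = S"
proof
  fix i
  show "row_inv n D r i = S i"
  proof (cases "i \<in> {1..n}")
    case True
    then show ?thesis
      using free[of "int i"] arc[of "int i"] is_free_of_nat[OF True] arc_end_non_free(4)[of "int i"]
        red_of_nat[OF True] unfolding row_inv_def by auto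
  next
    case False
    then show ?thesis using involution unfolding row_inv_def involution_on_def by auto
  qed
qed

lemma verticals_eq_image:
  assumes V: "\<And>k. D (g k, False) = (f (k + m), True)"
    and R: "\<And>j. snd (D (j, False)) \<Longrightarrow> j \<in> range g"
  shows "{(i, j). D (j, False) = (i, True) \<and> P i j} =
    (\<lambda>k. (f (k + m), g k)) ` {k. P (f (k + m)) (g k)}"
proof (intro equalityI subsetI)
  fix x assume "x \<in> {(i, j). D (j, False) = (i, True) \<and> P i j}"
  then obtain i j where x: "x = (i, j)" "D (j, False) = (i, True)" "P i j" by blast
  then obtain k where "j = g k" using R[of j] by auto
  then show "x \<in> (\<lambda>k. (f (k + m), g k)) ` {k. P (f (k + m)) (g k)}"
    using x V[of k] by auto
qed (use V in auto)

lemma wind_eq_shift: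
  fixes f g :: "int \<Rightarrow> int"
  assumes mono_f: "strict_mono f" and mono_g: "strict_mono g"
    and pos_f: "\<And>k. 1 \<le> f k \<longleftrightarrow> 0 \<le> k" and pos_g: "\<And>k. 1 \<le> g k \<longleftrightarrow> 0 \<le> k"
    and V: "\<And>k. D (g k, False) = (f (k + m), True)"
    and R: "\<And>j. snd (D (j, False)) \<Longrightarrow> j \<in> range g"
  shows "wind D = m"
proof -
  let ?pair = "\<lambda>k. (f (k + m), g k)"
  note image = verticals_eq_image[where D = D and f = f and g = g and m = m, OF V R]
  have inj: "inj_on ?pair K" for K
    using strict_mono_imp_inj_on[OF mono_g] by (auto intro!: inj_onI dest: injD)
  have "{(i, j). i > j \<and> D (j, False) = (i, True) \<and> j \<le> 0 \<and> 1 \<le> i}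
      = {(i, j). D (j, False) = (i, True) \<and> (i > j \<and> j \<le> 0 \<and> 1 \<le> i)}" by auto
  also have "\<dots> = ?pair ` {k. f (k + m) > g k \<and> g k \<le> 0 \<and> 1 \<le> f (k + m)}" by (rule image)
  also have "\<dots> = ?pair ` {-m..<0}"
  proof -
    have "f (k + m) > g k \<and> g k \<le> 0 \<and> 1 \<le> f (k + m) \<longleftrightarrow> k \<in> {-m..<0}" for k
      using pos_f[of "k + m"] pos_g[of k] by auto
    then show ?thesis by (simp only: Collect_mem_eq)
  qed
  finally have w1: "w1 D = nat m" unfolding w1_def using card_image[OF inj] by simp
  have "{(i, j). i < j \<and> D (j, False) = (i, True) \<and> i \<le> 0 \<and> 1 \<le> j}
      = {(i, j). D (j, False) = (i, True) \<and> (i < j \<and> i \<le> 0 \<and> 1 \<le> j)}" by auto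
  also have "\<dots> = ?pair ` {k. f (k + m) < g k \<and> f (k + m) \<le> 0 \<and> 1 \<le> g k}" by (rule image)
  also have "\<dots> = ?pair ` {0..<-m}"
  proof -
    have "f (k + m) < g k \<and> f (k + m) \<le> 0 \<and> 1 \<le> g k \<longleftrightarrow> k \<in> {0..<-m}" for k
      using pos_f[of "k + m"] pos_g[of k] by auto
    then show ?thesis by (simp only: Collect_mem_eq)
  qed
  finally have w2: "w2 D = nat (- m)" unfolding w2_def using card_image[OF inj] by simp
  show ?thesis unfolding wind_def w1 w2 by simp
qed

definition diagram_of :: "nat \<Rightarrow> (nat \<Rightarrow> nat) \<Rightarrow> (nat \<Rightarrow> nat) \<Rightarrow> int \<Rightarrow> diag" where
  "diagram_of n S1 S2 m = (\<lambda>(z, r).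
     if r then
       (if is_free n S1 z then (free_node n S2 (free_index n S1 z - m), False)
        else (arc_end n S1 z, True))
     else
       (if is_free n S2 z then (free_node n S1 (free_index n S2 z + m), True)
        else (arc_end n S2 z, False)))"

locale diagram_data = top: annular_involution n S1 + bot: annular_involution n S2
  for n :: nat and S1 S2 :: "nat \<Rightarrow> nat" +
  fixes m :: int
  assumes same_fixed_card: "card (fixed_points n S1) = card (fixed_points n S2)"
begin

abbreviation D :: diag where "D \<equiv> diagram_of n S1 S2 m"

lemma D_top_free: "is_free n S1 z \<Longrightarrow> D (z, True) = (free_node n S2 (free_index n S1 z - m), False)"
  and D_top_arc: "\<not> is_free n S1 z \<Longrightarrow> D (z, True) = (arc_end n S1 z, True)"
  and D_bot_free: "is_free n S2 z \<Longrightarrow> D (z, False) = (free_node n S1 (free_index n S2 z + m), True)"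
  and D_bot_arc: "\<not> is_free n S2 z \<Longrightarrow> D (z, False) = (arc_end n S2 z, False)"
  unfolding diagram_of_def by simp_all

lemma D_invol: "D (D x) = x"
proof -
  obtain z r where x: "x = (z, r)" by fastforce
  show ?thesis
  proof (cases r)
    case True
    then show ?thesis
      using x D_top_free D_bot_free D_top_arc top.arc_end_non_free(1,2) bot.is_free_free_node
        top.free_node_free_index by (cases "is_free n S1 z") auto
  next
    case False
    then show ?thesis
      using x D_top_free D_bot_free D_bot_arc bot.arc_end_non_free(1,2) top.is_free_free_node
        bot.free_node_free_index by (cases "is_free n S2 z") auto
  qed
qed

lemma D_no_fix: "D x \<noteq> x"
proof -
  obtain z r where x: "x = (z, r)" by fastforce
  then show ?thesis
    using D_top_free D_top_arc D_bot_free D_bot_arc top.arc_end_non_free(3) bot.arc_end_non_free(3)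
    by (cases r; cases "is_free n S1 z"; cases "is_free n S2 z") auto
qed

lemma D_shift_period: "D (z + int n, r) = (fst (D (z, r)) + int n, snd (D (z, r)))"
proof -
  have free_shift: "is_free n S (z + int n) \<longleftrightarrow> is_free n S z" for S
    using is_free_def red_add_mult[of n z 1] by simp
  have top_free: "free_node n S2 (free_index n S1 (z + int n) - m)
      = free_node n S2 (free_index n S1 z - m) + int n" if "is_free n S1 z"
    using top.free_index_add_mult[OF that, of 1] bot.free_node_add_period[of "free_index n S1 z - m" 1]
      same_fixed_card by (simp add: algebra_simps)
  have bot_free: "free_node n S1 (free_index n S2 (z + int n) + m)
      = free_node n S1 (free_index n S2 z + m) + int n" if "is_free n S2 z"
    using bot.free_index_add_mult[OF that, of 1] top.free_node_add_period[of "free_index n S2 z + m" 1]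
      same_fixed_card by (simp add: algebra_simps)
  show ?thesis
    using D_top_free D_top_arc D_bot_free D_bot_arc free_shift top_free bot_free
      top.arc_end_add_mult[of z 1] bot.arc_end_add_mult[of z 1]
    by (cases r; cases "is_free n S1 z"; cases "is_free n S2 z") simp_all
qed

lemma D_arcs_nested: "arcs_nested D r"
  unfolding arcs_nested_def
proof (intro allI impI)
  fix z y w assume zy: "D (z, r) = (y, r)" and zw: "z < w" and wy: "w < y"
  show "\<exists>u. D (w, r) = (u, r) \<and> z < u \<and> u < y"
  proof (cases r)
    case True
    then have nf: "\<not> is_free n S1 z" and y: "y = arc_end n S1 z"
      using zy D_top_free D_top_arc by (cases "is_free n S1 z"; simp)+
    then show ?thesis
      using top.arc_end_nested[OF nf, of w] D_top_arc True zw wy by auto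
  next
    case False
    then have nf: "\<not> is_free n S2 z" and y: "y = arc_end n S2 z"
      using zy D_bot_free D_bot_arc by (cases "is_free n S2 z"; simp)+
    then show ?thesis
      using bot.arc_end_nested[OF nf, of w] D_bot_arc False zw wy by auto
  qed
qed

lemma D_verticals_monotone: "verticals_monotone D"
  unfolding verticals_monotone_def
proof (intro allI impI)
  fix q q' p p' assume qp: "D (q, False) = (p, True)" and qp': "D (q', False) = (p', True)"
    and qq': "q < q'"
  have free: "is_free n S2 q" "is_free n S2 q'"
    using qp qp' D_bot_arc by fastforce+
  then have "free_index n S2 q < free_index n S2 q'"
    using bot.free_node_less_iff bot.free_node_free_index qq' by metis
  then show "p < p'" using qp qp' D_bot_free free top.free_node_less_iff by auto
qed

lemma D_is_diagram: "is_diagram n D"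
  unfolding is_diagram_def
  using D_invol D_no_fix D_shift_period D_arcs_nested D_verticals_monotone
    nested_imp_noncrossing[of D] by blast

lemma D_topS: "topS n D = S1" and D_botS: "botS n D = S2"
  unfolding topS_eq_row_inv botS_eq_row_inv
  using top.row_inv_eq[of D True] bot.row_inv_eq[of D False]
    D_top_free D_top_arc D_bot_free D_bot_arc by auto

lemma D_wind: "wind D = m"
proof (rule wind_eq_shift)
  show "D (free_node n S2 k, False) = (free_node n S1 (k + m), True)" for k
    using D_bot_free bot.is_free_free_node by simp
  show "j \<in> range (free_node n S2)" if "snd (D (j, False))" for j
    using that D_bot_arc bot.range_free_node by (cases "is_free n S2 j") auto
qed (use top.free_node_strict_mono bot.free_node_strict_mono top.free_node_pos_iff
    bot.free_node_pos_iff in auto)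

end

section \<open>A diagram is determined by its row involutions and winding number\<close>

lemma strict_mono_surj_int_shift:
  fixes g :: "int \<Rightarrow> int"
  assumes mono: "strict_mono g" and surj: "surj g"
  shows "g k = k + g 0"
proof -
  have step: "g (k + 1) = g k + 1" for k
  proof -
    obtain j where j: "g j = g k + 1" using surj by (metis surjD)
    then have "k < j" using mono by (metis less_add_one not_less strict_mono_less_eq)
    then have "g (k + 1) \<le> g j" using mono by (simp add: strict_mono_less_eq)
    moreover have "g k < g (k + 1)" using mono by (simp add: strict_mono_less)
    ultimately show ?thesis using j by simp
  qed
  show ?thesis
  proof (induction k rule: int_induct[where k = 0])
    case (step1 i)
    then show ?case using step[of i] by simp
  next
    case (step2 i)
    then show ?case using step[of "i - 1"] by simp
  qed simp
qed

locale odd_affine_diagram = affine_diagram +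
  assumes odd: "odd n"
begin

lemma row_inv_annular_involution: "annular_involution n (row_inv n D r)"
  using n_pos row_inv_annular row_inv_involution_on
    odd_involution_has_fixed_point[OF odd row_inv_involution_on]
  by unfold_locales

lemma is_free_row_inv_iff: "is_free n (row_inv n D r) z \<longleftrightarrow> snd (D (z, r)) \<noteq> r"
  unfolding is_free_def using row_inv_fixed_iff .

lemma inner_arc_no_fixed_between:
  assumes "1 \<le> i" "i < j" "j \<le> n" "D (int i, r) = (int j, r)"
  shows "no_fixed_between (row_inv n D r) i j"
  using row_inv_inner_arc[OF assms] unfolding no_fixed_between_def by auto

lemma outer_arc_fixed_between:
  assumes ij: "1 \<le> i" "i < j" "j \<le> n" and arc: "D (int j - int n, r) = (int i, r)"
  shows "\<not> no_fixed_between (row_inv n D r) i j"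
proof -
  interpret annular_involution n "row_inv n D r" by (rule row_inv_annular_involution)
  obtain f where f: "f \<in> {1..n}" "row_inv n D r f = f" using fixed_point_exists by blast
  then have "f \<in> {i..j}" using row_inv_outer_arc[OF ij arc] by blast
  then show ?thesis using f unfolding no_fixed_between_def by auto
qed

lemma arc_from_window_cases:
  assumes i: "i \<in> {1..n}" and iy: "D (int i, r) = (y, r)"
  defines "s \<equiv> row_inv n D r i"
  shows "s \<in> {1..n}" "s \<noteq> i"
    "y = int s \<or> (i < s \<and> y = int s - int n) \<or> (s < i \<and> y = int s + int n)"
proof -
  show s: "s \<in> {1..n}" using row_inv_in_window[OF i] unfolding s_def .
  have "red n y = s" using row_inv_red[OF iy] red_of_nat[OF i] unfolding s_def by simp
  then obtain k where k: "y = int s + k * int n"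
    using red_eq_imp_shift[OF n_pos, of y "int s"] red_of_nat[OF s] by auto
  show "s \<noteq> i" using k arc_ends_red_ne[OF iy] red_of_nat[OF i] red_add_mult \<open>red n y = s\<close> by auto
  have "(-2) * int n < k * int n \<and> k * int n < 2 * int n"
    using arc_length(2)[OF iy] k i s by (simp only: abs_less_iff atLeastAtMost_iff) linarith
  then have "-2 < k" "k < 2" using n_pos by (simp_all only: mult_less_cancel_right_pos of_nat_0_less_iff)
  moreover have "k = -1 \<longrightarrow> i < s" "k = 1 \<longrightarrow> s < i"
    using arc_length(2)[OF iy] k i s by (auto simp: abs_less_iff)
  ultimately show "y = int s \<or> (i < s \<and> y = int s - int n) \<or> (s < i \<and> y = int s + int n)"
    using k by (cases "k = 0"; cases "k = 1"; cases "k = -1") auto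
qed

lemma arc_eq_arc_end_in_window:
  assumes i: "i \<in> {1..n}" and iy: "D (int i, r) = (y, r)"
  shows "y = arc_end n (row_inv n D r) (int i)"
proof -
  interpret annular_involution n "row_inv n D r" by (rule row_inv_annular_involution)
  let ?s = "row_inv n D r i"
  note s = arc_from_window_cases[OF i iy]
  have yi: "D (y, r) = (int i, r)" using invol[of "(int i, r)"] iy by simp
  have Ss: "row_inv n D r ?s = i" using row_inv_invol[OF i] .
  consider (same) "y = int ?s" | (right) "i < ?s" "y = int ?s - int n"
    | (left) "?s < i" "y = int ?s + int n" using s(3) by blast
  then show ?thesis
  proof cases
    case same
    then have "no_fixed_between (row_inv n D r) (min i ?s) (max i ?s)"
      using inner_arc_no_fixed_between[of i ?s] inner_arc_no_fixed_between[of ?s i] iy yi i s(1,2)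
      by (cases "i < ?s") (auto simp: min_def max_def)
    then show ?thesis using arc_end_of_nat[OF i] same by simp
  next
    case right
    then have "\<not> no_fixed_between (row_inv n D r) i ?s"
      using outer_arc_fixed_between[of i ?s] yi i s(1) by auto
    then show ?thesis using arc_end_of_nat[OF i] right by (simp add: min_def max_def)
  next
    case left
    have "D (int i + (-1) * int n, r) = (int ?s, r)" using periodic[of "int i" "-1" r] iy left by simp
    then have "\<not> no_fixed_between (row_inv n D r) ?s i"
      using outer_arc_fixed_between[of ?s i] i s(1) left by auto
    then show ?thesis using arc_end_of_nat[OF i] left by (simp add: min_def max_def)
  qed
qed

lemma arc_eq_arc_end:
  assumes zy: "D (z, r) = (y, r)"
  shows "y = arc_end n (row_inv n D r) z"
proof -
  interpret annular_involution n "row_inv n D r" by (rule row_inv_annular_involution)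
  define i where "i = red n z"
  define a where "a = (z - 1) div int n"
  have "D (int i, r) = (y - a * int n, r)"
    using at_red[of z r] zy unfolding i_def a_def by (auto simp: prod_eq_iff)
  then have "y - a * int n = arc_end n (row_inv n D r) (int i)"
    using arc_eq_arc_end_in_window red_in_window[OF n_pos] unfolding i_def by blast
  then show ?thesis using arc_end_red[of z] unfolding i_def a_def by simp
qed

lemma free_node_vertical:
  assumes "is_free n (row_inv n D r) z"
  obtains p where "D (z, r) = (p, \<not> r)" "is_free n (row_inv n D (\<not> r)) p"
proof -
  obtain p where zp: "D (z, r) = (p, \<not> r)"
    using assms is_free_row_inv_iff by (cases "D (z, r)") auto
  then have "D (p, \<not> r) = (z, r)" using invol[of "(z, r)"] by simp
  then have "is_free n (row_inv n D (\<not> r)) p" using is_free_row_inv_iff[of "\<not> r" p] by simp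
  with zp show ?thesis by (rule that)
qed

lemma vertical_edges_shift:
  obtains c where "\<And>k. D (free_node n (botS n D) k, False) = (free_node n (topS n D) (k + c), True)"
proof -
  let ?S1 = "row_inv n D True" and ?S2 = "row_inv n D False"
  interpret top: annular_involution n ?S1 by (rule row_inv_annular_involution)
  interpret bot: annular_involution n ?S2 by (rule row_inv_annular_involution)
  define g where "g k = free_index n ?S1 (fst (D (free_node n ?S2 k, False)))" for k
  have Dg: "D (free_node n ?S2 k, False) = (free_node n ?S1 (g k), True)" for k
  proof -
    obtain p where "D (free_node n ?S2 k, False) = (p, True)" "is_free n ?S1 p"
      using free_node_vertical[OF bot.is_free_free_node, of k] by auto
    then show ?thesis using top.free_node_free_index unfolding g_def by simp
  qed
  have "strict_mono g"
  proof (rule strict_monoI)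
    fix k k' :: int assume "k < k'"
    then have "free_node n ?S2 k < free_node n ?S2 k'" using bot.free_node_less_iff by simp
    then have "free_node n ?S1 (g k) < free_node n ?S1 (g k')"
      by (rule verticals_monotone[unfolded verticals_monotone_def, rule_format, OF Dg Dg])
    then show "g k < g k'" using top.free_node_less_iff by simp
  qed
  moreover have "surj g"
    unfolding surj_def
  proof
    fix j
    obtain q where jq: "D (free_node n ?S1 j, True) = (q, False)" and q: "is_free n ?S2 q"
      using free_node_vertical[OF top.is_free_free_node, of j] by auto
    then have "D (free_node n ?S2 (free_index n ?S2 q), False) = (free_node n ?S1 j, True)"
      using invol[of "(free_node n ?S1 j, True)"] bot.free_node_free_index by simp
    then have "free_node n ?S1 (g (free_index n ?S2 q)) = free_node n ?S1 j" using Dg by simp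
    then have "j = g (free_index n ?S2 q)" using top.free_node_inj by (simp add: inj_eq)
    then show "\<exists>k. j = g k" ..
  qed
  ultimately have shift: "g k = k + g 0" for k by (rule strict_mono_surj_int_shift)
  have "D (free_node n ?S2 k, False) = (free_node n ?S1 (k + g 0), True)" for k
    using Dg[of k] shift[of k] by simp
  then show ?thesis by (rule that[unfolded topS_eq_row_inv botS_eq_row_inv])
qed

lemma diagram_eq_diagram_of_shift:
  assumes V: "\<And>k. D (free_node n (botS n D) k, False) = (free_node n (topS n D) (k + c), True)"
  shows "D = diagram_of n (topS n D) (botS n D) c"
proof -
  let ?S1 = "topS n D" and ?S2 = "botS n D"
  interpret top: annular_involution n ?S1 unfolding topS_eq_row_inv by (rule row_inv_annular_involution)
  interpret bot: annular_involution n ?S2 unfolding botS_eq_row_inv by (rule row_inv_annular_involution)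
  have top_free: "is_free n ?S1 z \<longleftrightarrow> \<not> snd (D (z, True))" for z
    using is_free_row_inv_iff[of True] unfolding topS_eq_row_inv by simp
  have bot_free: "is_free n ?S2 z \<longleftrightarrow> snd (D (z, False))" for z
    using is_free_row_inv_iff[of False] unfolding botS_eq_row_inv by simp
  have arc: "D (z, r) = (arc_end n (row_inv n D r) z, r)" if "snd (D (z, r)) = r" for z r
    using that arc_eq_arc_end[of z r] by (cases "D (z, r)") auto
  have "D (z, True) = diagram_of n ?S1 ?S2 c (z, True)" for z
  proof (cases "is_free n ?S1 z")
    case True
    then have "D (free_node n ?S2 (free_index n ?S1 z - c), False) = (z, True)"
      using V[of "free_index n ?S1 z - c"] top.free_node_free_index by simp
    then show ?thesis using invol[of "(free_node n ?S2 (free_index n ?S1 z - c), False)"] True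
      unfolding diagram_of_def by simp
  qed (use arc[of z True] top_free in \<open>simp add: diagram_of_def topS_eq_row_inv\<close>)
  moreover have "D (z, False) = diagram_of n ?S1 ?S2 c (z, False)" for z
    using V[of "free_index n ?S2 z"] bot.free_node_free_index arc[of z False] bot_free
    unfolding diagram_of_def botS_eq_row_inv by (cases "is_free n ?S2 z") auto
  ultimately show ?thesis by (intro ext) (metis (full_types) prod.collapse)
qed

lemma diagram_eq_diagram_of: "D = diagram_of n (topS n D) (botS n D) (wind D)"
proof -
  interpret top: annular_involution n "topS n D"
    unfolding topS_eq_row_inv by (rule row_inv_annular_involution)
  interpret bot: annular_involution n "botS n D"
    unfolding botS_eq_row_inv by (rule row_inv_annular_involution)
  obtain c where V: "\<And>k. D (free_node n (botS n D) k, False) = (free_node n (topS n D) (k + c), True)"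
    using vertical_edges_shift by blast
  have "j \<in> range (free_node n (botS n D))" if "snd (D (j, False))" for j
    using that is_free_row_inv_iff[of False j] bot.range_free_node
    unfolding botS_eq_row_inv by simp
  then have "wind D = c"
    by (rule wind_eq_shift[OF top.free_node_strict_mono bot.free_node_strict_mono
          top.free_node_pos_iff bot.free_node_pos_iff V])
  then show ?thesis using diagram_eq_diagram_of_shift[OF V] by simp
qed

end

lemma bracket_eq_diagram_of:
  assumes odd: "odd n" and t: "0 < t" and S1: "S1 \<in> Ann n \<inter> Inv n t" and S2: "S2 \<in> Ann n \<inter> Inv n t"
  shows "bracket n S1 S2 w = diagram_of n S1 S2 w"
    and "is_diagram n (bracket n S1 S2 w)" "topS n (bracket n S1 S2 w) = S1"
    "botS n (bracket n S1 S2 w) = S2" "wind (bracket n S1 S2 w) = w"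
proof -
  have n_pos: "0 < n" using odd odd_pos by blast
  interpret diagram_data n S1 S2 w
    using n_pos S1 S2 t unfolding Inv_def by unfold_locales auto
  have D: "is_diagram n D \<and> topS n D = S1 \<and> botS n D = S2 \<and> wind D = w"
    using D_is_diagram D_topS D_botS D_wind by blast
  show eq: "bracket n S1 S2 w = D" unfolding bracket_def
  proof (rule the_equality)
    fix E assume E: "is_diagram n E \<and> topS n E = S1 \<and> botS n E = S2 \<and> wind E = w"
    then interpret E: odd_affine_diagram n E using n_pos odd by unfold_locales auto
    show "E = D" using E.diagram_eq_diagram_of E by simp
  qed (rule D)
  show "is_diagram n (bracket n S1 S2 w)" "topS n (bracket n S1 S2 w) = S1"
    "botS n (bracket n S1 S2 w) = S2" "wind (bracket n S1 S2 w) = w"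
    using D unfolding eq by auto
qed

lemma diagram_eq_bracket:
  assumes odd: "odd n" and D: "is_diagram n D"
  defines "t \<equiv> card (fixed_points n (topS n D))"
  shows "0 < t" "topS n D \<in> Ann n \<inter> Inv n t" "botS n D \<in> Ann n \<inter> Inv n t"
    "D = bracket n (topS n D) (botS n D) (wind D)"
proof -
  interpret odd_affine_diagram n D using D odd odd_pos by unfold_locales auto
  show t: "0 < t" "topS n D \<in> Ann n \<inter> Inv n t" "botS n D \<in> Ann n \<inter> Inv n t"
    using topS_botS_classes[OF odd] unfolding t_def by auto
  show "D = bracket n (topS n D) (botS n D) (wind D)"
    using bracket_eq_diagram_of(1)[OF odd t] diagram_eq_diagram_of by simp
qed

section \<open>Linear algebra in the space of finitely supported functions\<close>

lemma lin_span_zero: "(\<lambda>E. 0) \<in> lin_span X"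
  unfolding lin_span_def by (intro CollectI exI[of _ "{}"]) auto

lemma lin_span_superset: "g \<in> X \<Longrightarrow> g \<in> lin_span X"
  unfolding lin_span_def by (intro CollectI exI[of _ "{g}"] exI[of _ "\<lambda>_. 1"]) auto

lemma lin_span_add:
  assumes f: "f \<in> lin_span X" and h: "h \<in> lin_span X"
  shows "(\<lambda>E. f E + h E) \<in> lin_span X"
proof -
  obtain G1 c1 where 1: "f = (\<lambda>E. \<Sum>g\<in>G1. c1 g * g E)" "finite G1" "G1 \<subseteq> X"
    using f unfolding lin_span_def by blast
  obtain G2 c2 where 2: "h = (\<lambda>E. \<Sum>g\<in>G2. c2 g * g E)" "finite G2" "G2 \<subseteq> X"
    using h unfolding lin_span_def by blast
  define c where "c g = (if g \<in> G1 then c1 g else 0) + (if g \<in> G2 then c2 g else 0)" for g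
  have fin: "finite (G1 \<union> G2)" using 1 2 by simp
  have "(\<Sum>g\<in>G1 \<union> G2. c g * g E) = f E + h E" for E
  proof -
    have "(\<Sum>g\<in>G1 \<union> G2. c g * g E) = (\<Sum>g\<in>G1 \<union> G2. if g \<in> G1 then c1 g * g E else 0)
        + (\<Sum>g\<in>G1 \<union> G2. if g \<in> G2 then c2 g * g E else 0)"
    proof -
      have "c g * g E = (if g \<in> G1 then c1 g * g E else 0) + (if g \<in> G2 then c2 g * g E else 0)" for g
        unfolding c_def by (simp add: distrib_right)
      then show ?thesis by (simp add: sum.distrib)
    qed
    also have "\<dots> = f E + h E"
      using sum.inter_restrict[OF fin, of "\<lambda>g. c1 g * g E" G1]
        sum.inter_restrict[OF fin, of "\<lambda>g. c2 g * g E" G2] 1 2 by (simp add: Int_absorb1)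
    finally show ?thesis .
  qed
  then show ?thesis using fin 1 2 unfolding lin_span_def
    by (intro CollectI exI[of _ "G1 \<union> G2"] exI[of _ c]) auto
qed

lemma lin_span_scale:
  assumes "f \<in> lin_span X"
  shows "(\<lambda>E. a * f E) \<in> lin_span X"
proof -
  obtain G c where G: "f = (\<lambda>E. \<Sum>g\<in>G. c g * g E)" "finite G" "G \<subseteq> X"
    using assms unfolding lin_span_def by blast
  then have "(\<lambda>E. a * f E) = (\<lambda>E. \<Sum>g\<in>G. (a * c g) * g E)"
    by (simp add: sum_distrib_left mult.assoc)
  then show ?thesis using G unfolding lin_span_def
    by (intro CollectI exI[of _ G] exI[of _ "\<lambda>g. a * c g"]) simp
qed

lemma lin_span_sum:
  assumes "finite A" "\<And>a. a \<in> A \<Longrightarrow> h a \<in> lin_span X"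
  shows "(\<lambda>E. \<Sum>a\<in>A. c a * h a E) \<in> lin_span X"
  using assms
proof (induction A rule: finite_induct)
  case (insert a A)
  then have "(\<lambda>E. c a * h a E + (\<Sum>a\<in>A. c a * h a E)) \<in> lin_span X"
    by (intro lin_span_add lin_span_scale) auto
  then show ?case using insert by simp
qed (simp add: lin_span_zero)

definition pairing :: "('b \<Rightarrow> 'a::field) \<Rightarrow> ('b \<Rightarrow> 'a) \<Rightarrow> 'a" where
  "pairing coord f = (\<Sum>E\<in>{E. f E \<noteq> 0}. f E * coord E)"

lemma pairing_eq_sum:
  "finite Z \<Longrightarrow> {E. f E \<noteq> 0} \<subseteq> Z \<Longrightarrow> pairing coord f = (\<Sum>E\<in>Z. f E * coord E)"
  unfolding pairing_def by (rule sum.mono_neutral_left) auto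

lemma pairing_sum:
  assumes G: "finite G" and fin: "\<And>i. i \<in> G \<Longrightarrow> finite {E. h i E \<noteq> 0}"
  shows "pairing coord (\<lambda>E. \<Sum>i\<in>G. c i * h i E) = (\<Sum>i\<in>G. c i * pairing coord (h i))"
proof -
  let ?Z = "\<Union>i\<in>G. {E. h i E \<noteq> 0}"
  have Z: "finite ?Z" using G fin by simp
  have "{E. (\<Sum>i\<in>G. c i * h i E) \<noteq> 0} \<subseteq> ?Z"
  proof
    fix E assume "E \<in> {E. (\<Sum>i\<in>G. c i * h i E) \<noteq> 0}"
    then obtain i where "i \<in> G" "c i * h i E \<noteq> 0" by (meson mem_Collect_eq sum.neutral)
    then show "E \<in> ?Z" by auto
  qed
  then have "pairing coord (\<lambda>E. \<Sum>i\<in>G. c i * h i E) = (\<Sum>E\<in>?Z. (\<Sum>i\<in>G. c i * h i E) * coord E)"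
    by (rule pairing_eq_sum[OF Z])
  also have "\<dots> = (\<Sum>E\<in>?Z. \<Sum>i\<in>G. c i * (h i E * coord E))"
    by (simp add: sum_distrib_right mult.assoc)
  also have "\<dots> = (\<Sum>i\<in>G. \<Sum>E\<in>?Z. c i * (h i E * coord E))"
    by (rule sum.swap)
  also have "\<dots> = (\<Sum>i\<in>G. c i * (\<Sum>E\<in>?Z. h i E * coord E))"
    by (simp add: sum_distrib_left)
  also have "\<dots> = (\<Sum>i\<in>G. c i * pairing coord (h i))"
  proof (rule sum.cong[OF refl])
    fix i assume "i \<in> G"
    then have "pairing coord (h i) = (\<Sum>E\<in>?Z. h i E * coord E)" by (intro pairing_eq_sum[OF Z]) auto
    then show "c i * (\<Sum>E\<in>?Z. h i E * coord E) = c i * pairing coord (h i)" by simp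
  qed
  finally show ?thesis .
qed

lemma pairing_dvec: "pairing coord (dvec D) = coord D"
  by (subst pairing_eq_sum[of "{D}"]) (auto simp: dvec_def)

lemma pairing_dvec_diff: "pairing coord (\<lambda>E. dvec D E - a * dvec D' E) = coord D - a * coord D'"
proof -
  have "pairing coord (\<lambda>E. dvec D E - a * dvec D' E)
      = (\<Sum>E\<in>{D, D'}. (dvec D E - a * dvec D' E) * coord E)"
    by (rule pairing_eq_sum) (auto simp: dvec_def)
  then show ?thesis by (cases "D = D'") (simp_all add: dvec_def algebra_simps)
qed

section \<open>The basis of the quotient\<close>

abbreviation basis_elem :: "nat \<Rightarrow> nat \<times> (nat \<Rightarrow> nat) \<times> (nat \<Rightarrow> nat) \<times> nat \<Rightarrow> diag \<Rightarrow> 'a::field" where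
  "basis_elem n \<equiv> \<lambda>(t, S1, S2, \<tau>). dvec (bracket n S1 S2 (int \<tau>))"

definition coordinate ::
    "nat \<Rightarrow> 'a::field \<Rightarrow> nat \<times> (nat \<Rightarrow> nat) \<times> (nat \<Rightarrow> nat) \<times> nat \<Rightarrow> diag \<Rightarrow> 'a" where
  "coordinate n q = (\<lambda>(t, A, B, \<tau>) E.
     if is_diagram n E \<and> topS n E = A \<and> botS n E = B \<and> wind E mod int t = int \<tau>
     then q powi (- (wind E div int t)) else 0)"

lemma coordinate_bracket:
  assumes "odd n" "0 < t" "S1 \<in> Ann n \<inter> Inv n t" "S2 \<in> Ann n \<inter> Inv n t"
  shows "coordinate n q (t0, A, B, \<tau>0) (bracket n S1 S2 w) =
    (if S1 = A \<and> S2 = B \<and> w mod int t0 = int \<tau>0 then q powi (- (w div int t0)) else 0)"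
proof -
  note props = bracket_eq_diagram_of(2-5)[OF assms, of w]
  have "(is_diagram n (bracket n S1 S2 w) \<and> topS n (bracket n S1 S2 w) = A \<and>
      botS n (bracket n S1 S2 w) = B \<and> wind (bracket n S1 S2 w) mod int t0 = int \<tau>0)
    = (S1 = A \<and> S2 = B \<and> w mod int t0 = int \<tau>0)"
    using props by simp
  then show ?thesis unfolding coordinate_def by (simp only: prod.case props(4))
qed

lemma finite_support_basis_elem: "finite {E. basis_elem n i E \<noteq> 0}"
  by (cases i) (simp add: dvec_def)

lemma Jindex_card: "(t, A, B, \<tau>) \<in> Jindex n \<Longrightarrow> card (fixed_points n A) = t"
  unfolding Jindex_def Inv_def by simp

lemma pairing_coordinate_generator:
  fixes q :: "'a::field"
  assumes odd: "odd n" and q: "q \<noteq> 0" and i0: "(t0, A, B, \<tau>0) \<in> Jindex n"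
    and t: "0 < t" and S: "S1 \<in> Ann n \<inter> Inv n t" "S2 \<in> Ann n \<inter> Inv n t"
  shows "pairing (coordinate n q (t0, A, B, \<tau>0))
    (\<lambda>E. dvec (bracket n S1 S2 w) E - q powi s * dvec (bracket n S1 S2 (w + int t * s)) E) = 0"
proof (cases "S1 = A \<and> S2 = B")
  case True
  then have "t0 = t" using Jindex_card[OF i0] S unfolding Inv_def by auto
  moreover have "q powi s * q powi (- (w div int t + s)) = q powi (- (w div int t))"
    using power_int_add[of q s "- (w div int t + s)"] q by simp
  moreover have "(w + int t * s) mod int t = w mod int t" "(w + int t * s) div int t = w div int t + s"
    using t by simp_all
  ultimately show ?thesis
    unfolding pairing_dvec_diff coordinate_bracket[OF odd t S] using True by simp
qed (auto simp: pairing_dvec_diff coordinate_bracket[OF odd t S])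

lemma pairing_coordinate_omega:
  fixes q :: "'a::field"
  assumes odd: "odd n" and q: "q \<noteq> 0" and i0: "i0 \<in> Jindex n" and f: "f \<in> omega n q"
  shows "pairing (coordinate n q i0) f = 0"
proof -
  obtain t0 A B \<tau>0 where i0_eq: "i0 = (t0, A, B, \<tau>0)" by (cases i0) auto
  let ?X = "{(\<lambda>E. dvec (bracket n S1 S2 w) E - q powi s * dvec (bracket n S1 S2 (w + int t * s)) E)
       | t S1 S2 w s. t > 0 \<and> S1 \<in> Ann n \<inter> Inv n t \<and> S2 \<in> Ann n \<inter> Inv n t}"
  obtain H c where H: "f = (\<lambda>E. \<Sum>g\<in>H. c g * g E)" "finite H" "H \<subseteq> ?X"
    using f unfolding omega_def lin_span_def by blast
  have gen: "finite {E. g E \<noteq> 0} \<and> pairing (coordinate n q i0) g = 0" if "g \<in> ?X" for g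
  proof -
    obtain t S1 S2 w s where g: "g = (\<lambda>E. dvec (bracket n S1 S2 w) E
        - q powi s * dvec (bracket n S1 S2 (w + int t * s)) E)"
      and cls: "t > 0" "S1 \<in> Ann n \<inter> Inv n t" "S2 \<in> Ann n \<inter> Inv n t"
      using \<open>g \<in> ?X\<close> by blast
    have "{E. g E \<noteq> 0} \<subseteq> {bracket n S1 S2 w, bracket n S1 S2 (w + int t * s)}"
      unfolding g dvec_def by auto
    then have "finite {E. g E \<noteq> 0}" by (rule finite_subset) simp
    then show ?thesis
      using pairing_coordinate_generator[OF odd q i0[unfolded i0_eq] cls] unfolding g i0_eq by simp
  qed
  have "pairing (coordinate n q i0) f = (\<Sum>g\<in>H. c g * pairing (coordinate n q i0) g)"
    unfolding H(1) using gen H(3) by (intro pairing_sum[OF H(2)]) blast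
  also have "\<dots> = 0" using gen H(3) by (simp add: subset_iff)
  finally show ?thesis .
qed

lemma pairing_coordinate_basis_elem:
  fixes q :: "'a::field"
  assumes odd: "odd n" and i: "i \<in> Jindex n" and i0: "i0 \<in> Jindex n"
  shows "pairing (coordinate n q i0) (basis_elem n i) = (if i = i0 then 1 else 0)"
proof -
  obtain t S1 S2 \<tau> where i_eq: "i = (t, S1, S2, \<tau>)" by (cases i) auto
  obtain t0 A B \<tau>0 where i0_eq: "i0 = (t0, A, B, \<tau>0)" by (cases i0) auto
  have cls: "0 < t" "S1 \<in> Ann n \<inter> Inv n t" "S2 \<in> Ann n \<inter> Inv n t" "\<tau> < t"
    using i unfolding i_eq Jindex_def by auto
  have "pairing (coordinate n q i0) (basis_elem n i) = coordinate n q (t0, A, B, \<tau>0) (bracket n S1 S2 (int \<tau>))"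
    unfolding i_eq i0_eq by (simp add: pairing_dvec)
  also have "\<dots> = (if S1 = A \<and> S2 = B \<and> int \<tau> mod int t0 = int \<tau>0 then q powi (- (int \<tau> div int t0)) else 0)"
    by (rule coordinate_bracket[OF odd cls(1-3)])
  also have "\<dots> = (if i = i0 then 1 else 0)"
  proof (cases "S1 = A")
    case True
    then have "t0 = t" using Jindex_card[OF i[unfolded i_eq]] Jindex_card[OF i0[unfolded i0_eq]] by simp
    then show ?thesis using cls(4) True unfolding i_eq i0_eq by auto
  qed (simp add: i_eq i0_eq)
  finally show ?thesis .
qed

lemma basis_elem_independent_mod_omega:
  fixes q :: "'a::field"
  assumes odd: "odd n" and q: "q \<noteq> 0" and G: "finite G" "G \<subseteq> Jindex n"
    and in_omega: "(\<lambda>E. \<Sum>i\<in>G. c i * basis_elem n i E) \<in> omega n q" and i0: "i0 \<in> G"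
  shows "c i0 = 0"
proof -
  have "0 = pairing (coordinate n q i0) (\<lambda>E. \<Sum>i\<in>G. c i * basis_elem n i E)"
    using pairing_coordinate_omega[OF odd q _ in_omega, of i0] i0 G by auto
  also have "\<dots> = (\<Sum>i\<in>G. c i * pairing (coordinate n q i0) (basis_elem n i))"
    by (rule pairing_sum[OF G(1)]) (rule finite_support_basis_elem)
  also have "\<dots> = (\<Sum>i\<in>G. if i = i0 then c i else 0)"
  proof (rule sum.cong[OF refl])
    fix i assume "i \<in> G"
    then have "i \<in> Jindex n" "i0 \<in> Jindex n" using G i0 by auto
    then show "c i * pairing (coordinate n q i0) (basis_elem n i) = (if i = i0 then c i else 0)"
      by (simp add: pairing_coordinate_basis_elem[OF odd])
  qed
  also have "\<dots> = c i0" using G(1) i0 by simp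
  finally show ?thesis by simp
qed

definition diagram_index :: "nat \<Rightarrow> diag \<Rightarrow> nat \<times> (nat \<Rightarrow> nat) \<times> (nat \<Rightarrow> nat) \<times> nat" where
  "diagram_index n D = (let t = card (fixed_points n (topS n D)) in
     (t, topS n D, botS n D, nat (wind D mod int t)))"

definition diagram_shift :: "nat \<Rightarrow> diag \<Rightarrow> int" where
  "diagram_shift n D = wind D div int (card (fixed_points n (topS n D)))"

lemma dvec_congruent_basis_elem:
  fixes q :: "'a::field"
  assumes odd: "odd n" and D: "is_diagram n D"
  shows "diagram_index n D \<in> Jindex n"
    and "(\<lambda>E. dvec D E - q powi (- diagram_shift n D) * basis_elem n (diagram_index n D) E) \<in> omega n q"
proof -
  define t where "t = card (fixed_points n (topS n D))"
  note cls = diagram_eq_bracket[OF odd D, folded t_def]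
  have "nat (wind D mod int t) < t" using cls(1) by (simp add: nat_less_iff)
  then show "diagram_index n D \<in> Jindex n"
    using cls unfolding diagram_index_def Jindex_def t_def[symmetric] by simp
  have "wind D + int t * (- (wind D div int t)) = int (nat (wind D mod int t))"
    using cls(1) div_mult_mod_eq[of "wind D" "int t"] by (simp add: algebra_simps)
  then have eq: "(\<lambda>E. dvec D E - q powi (- diagram_shift n D) * basis_elem n (diagram_index n D) E)
      = (\<lambda>E. dvec (bracket n (topS n D) (botS n D) (wind D)) E - q powi (- (wind D div int t))
          * dvec (bracket n (topS n D) (botS n D) (wind D + int t * (- (wind D div int t)))) E)"
    using cls(4) unfolding diagram_index_def diagram_shift_def t_def[symmetric] by simp
  show "(\<lambda>E. dvec D E - q powi (- diagram_shift n D) * basis_elem n (diagram_index n D) E) \<in> omega n q"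
    unfolding omega_def eq using cls(1-3) by (intro lin_span_superset) blast
qed

lemma finite_support_expansion:
  assumes "finite Z" "{D. x D \<noteq> 0} \<subseteq> Z"
  shows "x E = (\<Sum>D\<in>Z. x D * dvec D E)"
proof -
  have "(\<Sum>D\<in>Z. x D * dvec D E) = (\<Sum>D\<in>Z. if D = E then x D else 0)"
    by (rule sum.cong) (auto simp: dvec_def)
  also have "\<dots> = (if E \<in> Z then x E else 0)" using assms(1) by (rule sum.delta)
  finally show ?thesis using assms(2) by auto
qed

lemma basis_elem_span_mod_omega:
  fixes q :: "'a::field"
  assumes odd: "odd n" and x: "x \<in> Dn n"
  shows "\<exists>G c. finite G \<and> G \<subseteq> Jindex n \<and>
    (\<lambda>E. x E - (\<Sum>i\<in>G. c i * basis_elem n i E)) \<in> omega n q"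
proof -
  define Z where "Z = {D. x D \<noteq> 0}"
  have Z: "finite Z" and diag: "\<And>D. D \<in> Z \<Longrightarrow> is_diagram n D"
    using x unfolding Z_def Dn_def by auto
  define gen where "gen D = (\<lambda>E. dvec D E - q powi (- diagram_shift n D)
      * basis_elem n (diagram_index n D) E)" for D
  define G where "G = diagram_index n ` Z"
  define c where "c i = (\<Sum>D\<in>{D \<in> Z. diagram_index n D = i}. x D * q powi (- diagram_shift n D))" for i
  have group: "(\<Sum>i\<in>G. c i * basis_elem n i E)
      = (\<Sum>D\<in>Z. x D * q powi (- diagram_shift n D) * basis_elem n (diagram_index n D) E)" for E
  proof -
    have "(\<Sum>i\<in>G. c i * basis_elem n i E) = (\<Sum>i\<in>G. \<Sum>D\<in>{D \<in> Z. diagram_index n D = i}.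
        x D * q powi (- diagram_shift n D) * basis_elem n (diagram_index n D) E)"
      unfolding c_def sum_distrib_right by (intro sum.cong refl) auto
    also have "\<dots> = (\<Sum>D\<in>Z. x D * q powi (- diagram_shift n D) * basis_elem n (diagram_index n D) E)"
      unfolding G_def by (rule sum.group[OF Z finite_imageI[OF Z] subset_refl])
    finally show ?thesis .
  qed
  have expand: "(\<lambda>E. x E - (\<Sum>i\<in>G. c i * basis_elem n i E)) = (\<lambda>E. \<Sum>D\<in>Z. x D * gen D E)"
  proof
    fix E
    have "x E = (\<Sum>D\<in>Z. x D * dvec D E)" by (rule finite_support_expansion[OF Z]) (simp add: Z_def)
    then show "x E - (\<Sum>i\<in>G. c i * basis_elem n i E) = (\<Sum>D\<in>Z. x D * gen D E)"
      unfolding group gen_def by (simp add: sum_subtractf right_diff_distrib mult.assoc)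
  qed
  have "(\<lambda>E. \<Sum>D\<in>Z. x D * gen D E) \<in> omega n q"
    unfolding omega_def
  proof (rule lin_span_sum[OF Z])
    fix D assume "D \<in> Z"
    then show "gen D \<in> lin_span {(\<lambda>E. dvec (bracket n S1 S2 w) E
        - q powi s * dvec (bracket n S1 S2 (w + int t * s)) E)
       | t S1 S2 w s. t > 0 \<and> S1 \<in> Ann n \<inter> Inv n t \<and> S2 \<in> Ann n \<inter> Inv n t}"
      using dvec_congruent_basis_elem(2)[OF odd diag] unfolding omega_def gen_def by blast
  qed
  moreover have "finite G" "G \<subseteq> Jindex n"
    using Z dvec_congruent_basis_elem(1)[OF odd diag] unfolding G_def by auto
  ultimately show ?thesis unfolding expand[symmetric] by blast
qed

theorem quotient_basis_bracket:
  fixes q :: "'a::field"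
  assumes odd: "odd n" and q: "q \<noteq> 0"
  shows "quotient_basis (Dn n :: (diag \<Rightarrow> 'a) set) (omega n q) (Jindex n) (basis_elem n)"
  unfolding quotient_basis_def
proof (intro conjI ballI allI impI)
  fix i assume "i \<in> Jindex n"
  then obtain t S1 S2 \<tau> where "i = (t, S1, S2, \<tau>)" "0 < t" "S1 \<in> Ann n \<inter> Inv n t"
    "S2 \<in> Ann n \<inter> Inv n t" unfolding Jindex_def by blast
  then show "basis_elem n i \<in> Dn n"
    using bracket_eq_diagram_of(2)[OF odd] unfolding Dn_def dvec_def by simp
qed (use basis_elem_span_mod_omega[OF odd] basis_elem_independent_mod_omega[OF odd q] in blast)+

lemma qvar_nonzero: "qvar \<noteq> (0::'k::field poly fract)"
  unfolding qvar_def by (simp add: Zero_fract_def eq_fract)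

theorem lemma3p3p5:
  fixes n :: nat and F :: "'k::field set" and v :: 'k
  assumes "n \<ge> 3" and "odd n"
    and "is_subfield F" and "transcendental_over v F"
  shows "quotient_basis (Dn n :: (diag \<Rightarrow> 'k poly fract) set) (omega n qvar) (Jindex n)
           (\<lambda>(t, S1, S2, \<tau>). dvec (bracket n S1 S2 (int \<tau>)))"
  using quotient_basis_bracket[OF assms(2) qvar_nonzero] .

end
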